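(* Let $n\ge 1$, let $\xi_1,\dots,\xi_n$ be $n$ distinct points on the unit circle $\mathbb{T}=\{|\zeta|=1\}$, and let $\nu_1,\dots,\nu_n>0$ with $\sum_{j=1}^n\nu_j=1$. Then there is a unique $n\times n$ finite CMV matrix $\mathcal{C}=\mathcal{C}(\alpha_0,\dots,\alpha_{n-2};\beta)$ (with $|\alpha_j|<1$, $|\beta|=1$) whose $n$-th spectral measure is $\sum_{j=1}^n\nu_j\,\delta(\xi_j)$.
   Context: For $\alpha\in\mathbb{C}$ with $|\alpha|\le 1$ put $\rho=\sqrt{1-|\alpha|^2}$ and $\Theta(\alpha)=\begin{pmatrix}\bar\alpha&\rho\\ \rho&-\alpha\end{pmatrix}$. Given $\alpha_0,\dots,\alpha_{n-2}$ with $|\alpha_j|<1$ and $\beta$ with $|\beta|=1$, the finite CMV matrix $\mathcal{C}(\alpha_0,\dots,\alpha_{n-2};\beta)$ of order $n$ is the $n\times n$ unitary matrix $\mathcal{L}\mathcal{M}$, where: if $n=2k+1$, $\mathcal{L}=\Theta(\alpha_0)\oplus\Theta(\alpha_2)\oplus\cdots\oplus\Theta(\alpha_{2k-2})\oplus\bar\beta$ and $\mathcal{M}=1\oplus\Theta(\alpha_1)\oplus\Theta(\alpha_3)\oplus\cdots\oplus\Theta(\alpha_{2k-1})$; if $n=2k$, $\mathcal{L}=\Theta(\alpha_0)\oplus\Theta(\alpha_2)\oplus\cdots\oplus\Theta(\alpha_{2k-2})$ and $\mathcal{M}=1\oplus\Theta(\alpha_1)\oplus\cdots\oplus\Theta(\alpha_{2k-3})\oplus\bar\beta$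 (here $1$ and $\bar\beta$ denote $1\times1$ blocks). Such a matrix has $n$ distinct eigenvalues $\zeta_1,\dots,\zeta_n\in\mathbb{T}$ with an orthonormal eigenbasis $h_1,\dots,h_n$ of $\mathbb{C}^n$. With $e_n$ the last standard basis vector of $\mathbb{C}^n$, the $n$-th spectral measure of $\mathcal{C}$ is $\sum_{j=1}^n|(h_j,e_n)|^2\,\delta(\zeta_j)$, i.e. the spectral measure of $\mathcal{C}$ associated with the vector $e_n$; $\delta(\zeta)$ denotes the unit point mass at $\zeta$. *)

theory Defs
  imports Complex_Main
begin

text \<open>Matrices of order n are represented as functions nat => nat => complex,
  with row/column indices 0..n-1; entries outside this range are 0.
  Vectors in C^n are functions nat => complex with indices 0..n-1.\<close>

definition rho :: "complex \<Rightarrow> complex" where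
  "rho a = complex_of_real (sqrt (1 - (cmod a)^2))"

definition Theta :: "complex \<Rightarrow> nat \<Rightarrow> nat \<Rightarrow> complex" where
  "Theta a r c = (if r = 0 \<and> c = 0 then cnj a
                  else if r = 1 \<and> c = 1 then - a
                  else rho a)"

text \<open>L = Theta(alpha_0) + Theta(alpha_2) + ... (+ cnj beta if n odd).\<close>
definition cmv_L :: "nat \<Rightarrow> (nat \<Rightarrow> complex) \<Rightarrow> complex \<Rightarrow> nat \<Rightarrow> nat \<Rightarrow> complex" where
  "cmv_L n \<alpha> \<beta> i j =
     (if i < n \<and> j < n then
        (if i div 2 = j div 2 \<and> 2 * (i div 2) + 1 < n
         then Theta (\<alpha> (2 * (i div 2))) (i mod 2) (j mod 2)
         else if i = n - 1 \<and> j = n - 1 \<and> odd n then cnj \<beta>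
         else 0)
      else 0)"

text \<open>M = 1 + Theta(alpha_1) + Theta(alpha_3) + ... (+ cnj beta if n even).\<close>
definition cmv_M :: "nat \<Rightarrow> (nat \<Rightarrow> complex) \<Rightarrow> complex \<Rightarrow> nat \<Rightarrow> nat \<Rightarrow> complex" where
  "cmv_M n \<alpha> \<beta> i j =
     (if i < n \<and> j < n then
        (if i = 0 \<and> j = 0 then 1
         else if 1 \<le> i \<and> 1 \<le> j \<and> (i - 1) div 2 = (j - 1) div 2
                 \<and> 2 * ((i - 1) div 2) + 2 < n
         then Theta (\<alpha> (2 * ((i - 1) div 2) + 1)) ((i - 1) mod 2) ((j - 1) mod 2)
         else if i = n - 1 \<and> j = n - 1 \<and> even n then cnj \<beta>
         else 0)
      else 0)"

definition cmv :: "nat \<Rightarrow> (nat \<Rightarrow> complex) \<Rightarrow> complex \<Rightarrow> nat \<Rightarrow> nat \<Rightarrow> complex" where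
  "cmv n \<alpha> \<beta> i j = (\<Sum>k<n. cmv_L n \<alpha> \<beta> i k * cmv_M n \<alpha> \<beta> k j)"

definition inner_n :: "nat \<Rightarrow> (nat \<Rightarrow> complex) \<Rightarrow> (nat \<Rightarrow> complex) \<Rightarrow> complex" where
  "inner_n n x y = (\<Sum>k<n. x k * cnj (y k))"

text \<open>A finitely supported (point-mass) measure on the circle is represented
  by its weight function w: w z is the mass at the point z.
  spectral_measure n U v w: there is an orthonormal eigenbasis h_0..h_{n-1}
  of U with eigenvalues zeta_0..zeta_{n-1} such that
  w = sum_j |(h_j, v)|^2 delta(zeta_j).\<close>
definition spectral_measure ::
  "nat \<Rightarrow> (nat \<Rightarrow> nat \<Rightarrow> complex) \<Rightarrow> (nat \<Rightarrow> complex) \<Rightarrow> (complex \<Rightarrow> real) \<Rightarrow> bool" where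
  "spectral_measure n U v w \<longleftrightarrow>
     (\<exists>h :: nat \<Rightarrow> nat \<Rightarrow> complex. \<exists>\<zeta> :: nat \<Rightarrow> complex.
        (\<forall>j<n. \<forall>i<n. (\<Sum>k<n. U i k * h j k) = \<zeta> j * h j i) \<and>
        (\<forall>j<n. \<forall>l<n. inner_n n (h j) (h l) = (if j = l then 1 else 0)) \<and>
        (\<forall>z. w z = (\<Sum>j\<in>{j. j < n \<and> \<zeta> j = z}. (cmod (inner_n n (h j) v))^2)))"

text \<open>Last standard basis vector e_n of C^n (index n-1).\<close>
definition e_last :: "nat \<Rightarrow> nat \<Rightarrow> complex" where
  "e_last n i = (if i = n - 1 then 1 else 0)"

end

theory Submission
  imports Defs
begin

text \<open>For \<mu> = \<Sum>_j \<nu>_j \<delta>(\<xi>_j), multiplication by z on L^2(\<mu>) = \<complex>^n is represented by a CMV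
  matrix in the CMV basis, obtained by orthonormalizing v = (\<surd>\<nu>_j) and its images under powers of z
  and z\<inverse> in alternating order, arranged so that v corresponds to e_n. Multiplication by z (resp. z\<inverse>)
  maps the span of the later basis vectors into the span starting one or two indices earlier,
  which forces the zero pattern of CMV matrices, and the normalizations make the extreme entries
  positive (after rephasing). Any unitary matrix with this zero pattern and these positive
  entries is a CMV matrix: its first column is (cnj \<alpha>_0, \<rho>(\<alpha>_0), 0, ..., 0), and removing the factor
  \<Theta>(\<alpha>_0) \<oplus> 1 leaves 1 \<oplus> C'^T with C' of the same kind.

  For uniqueness, two CMV matrices with the same n-th spectral measure are intertwined by the
  unitary W mapping one normalized eigenbasis to the other, and W fixes e_n. Going down from the
  last index, the zero pattern forces every row and column of W to be trivial, so W is diagonal;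
  the positive entries then force its diagonal to be constant, hence the matrices agree.\<close>

section \<open>Orthonormal bases of \<complex>^n\<close>

definition sqnorm_n :: "nat \<Rightarrow> (nat \<Rightarrow> complex) \<Rightarrow> real" where
  "sqnorm_n n x = (\<Sum>k<n. (cmod (x k))^2)"

definition orthonormal_n :: "nat \<Rightarrow> (nat \<Rightarrow> nat \<Rightarrow> complex) \<Rightarrow> bool" where
  "orthonormal_n n q \<longleftrightarrow> (\<forall>i<n. \<forall>j<n. inner_n n (q i) (q j) = (if i = j then 1 else 0))"

definition unit_vec :: "nat \<Rightarrow> nat \<Rightarrow> complex" where
  "unit_vec l k = (if k = l then 1 else 0)"

lemma mult_if_one_zero [simp]:
  "(if P then 1 else 0) * (x::complex) = (if P then x else 0)"
  "x * (if P then 1 else 0) = (if P then x else 0)"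
  by auto

lemma cnj_if_one_zero [simp]: "cnj (if P then 1 else 0) = (if P then 1 else 0)"
  by auto

lemma mult_cnj_self: "z * cnj z = (complex_of_real (cmod z))^2"
  by (metis complex_norm_square of_real_power)

lemma norm_eq_1_if_mult_cnj: "z * cnj z = 1 \<Longrightarrow> cmod z = 1"
proof -
  assume "z * cnj z = 1"
  then have "(cmod z)^2 = 1" by (metis complex_mod_mult_cnj norm_one)
  then show ?thesis using norm_ge_zero[of z] by (simp add: power2_eq_1_iff)
qed

lemma unit_sum_others_zero:
  fixes f :: "nat \<Rightarrow> complex"
  assumes s: "(\<Sum>b<n. f b * cnj (f b)) = 1" and fm: "f m * cnj (f m) = 1" and m: "m < n"
    and b: "b < n" "b \<noteq> m"
  shows "f b = 0"
proof -
  have "(\<Sum>b<n. f b * cnj (f b)) = f m * cnj (f m) + (\<Sum>b\<in>{..<n} - {m}. f b * cnj (f b))"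
    using m by (simp add: sum.remove)
  then have "(\<Sum>b\<in>{..<n} - {m}. f b * cnj (f b)) = 0" using s fm by simp
  then have "complex_of_real (\<Sum>b\<in>{..<n} - {m}. (cmod (f b))^2) = 0"
    by (simp add: of_real_sum mult_cnj_self)
  then have "\<forall>b\<in>{..<n} - {m}. (cmod (f b))^2 = 0"
    by (subst (asm) of_real_eq_0_iff, subst (asm) sum_nonneg_eq_0_iff) auto
  then show ?thesis using b by simp
qed

lemma inner_n_self: "inner_n n x x = of_real (sqnorm_n n x)"
  unfolding inner_n_def sqnorm_n_def of_real_sum
  by (intro sum.cong refl) (metis complex_norm_square of_real_power)

lemma sqnorm_n_nonneg: "sqnorm_n n x \<ge> 0"
  unfolding sqnorm_n_def by (simp add: sum_nonneg)

lemma sqnorm_n_eq_0D: "sqnorm_n n x = 0 \<Longrightarrow> k < n \<Longrightarrow> x k = 0"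
  unfolding sqnorm_n_def by (subst (asm) sum_nonneg_eq_0_iff) auto

lemma sqnorm_n_eq_1_if_inner: "inner_n n x x = 1 \<Longrightarrow> sqnorm_n n x = 1"
  by (metis inner_n_self of_real_eq_1_iff)

lemma inner_n_commute: "inner_n n x y = cnj (inner_n n y x)"
  unfolding inner_n_def by (simp add: mult.commute)

lemma inner_n_cong:
  "(\<forall>t<n. x t = x' t) \<Longrightarrow> (\<forall>t<n. z t = z' t) \<Longrightarrow> inner_n n x z = inner_n n x' z'"
  unfolding inner_n_def by (intro sum.cong) auto

lemma inner_n_sum_left:
  "inner_n n (\<lambda>k. \<Sum>i\<in>A. c i * v i k) z = (\<Sum>i\<in>A. c i * inner_n n (v i) z)"
  unfolding inner_n_def
  by (simp add: sum_distrib_right sum_distrib_left mult.assoc sum.swap[of _ A])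

lemma inner_n_sum_right:
  "inner_n n z (\<lambda>k. \<Sum>i\<in>A. c i * v i k) = (\<Sum>i\<in>A. cnj (c i) * inner_n n z (v i))"
  by (subst inner_n_commute, subst inner_n_sum_left) (simp add: inner_n_commute[of n z])

lemma inner_n_diff_left:
  "inner_n n (\<lambda>k. x k - y k) z = inner_n n x z - inner_n n y z"
  unfolding inner_n_def by (simp add: algebra_simps sum_subtractf)

lemma inner_n_diff_right:
  "inner_n n z (\<lambda>k. x k - y k) = inner_n n z x - inner_n n z y"
  unfolding inner_n_def by (simp add: algebra_simps sum_subtractf)

lemma inner_n_add_left:
  "inner_n n (\<lambda>k. x k + y k) z = inner_n n x z + inner_n n y z"
  unfolding inner_n_def by (simp add: algebra_simps sum.distrib)

lemma inner_n_scale_left: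
  "inner_n n (\<lambda>k. a * x k) z = a * inner_n n x z"
  unfolding inner_n_def by (simp add: algebra_simps sum_distrib_left)

lemma inner_n_scale_right:
  "inner_n n z (\<lambda>k. a * x k) = cnj a * inner_n n z x"
  unfolding inner_n_def by (simp add: algebra_simps sum_distrib_left)

lemma inner_n_unit_vec_left: "l < n \<Longrightarrow> inner_n n (unit_vec l) z = cnj (z l)"
  unfolding inner_n_def unit_vec_def by simp

lemma inner_n_unit_vec_right: "l < n \<Longrightarrow> inner_n n z (unit_vec l) = z l"
  unfolding inner_n_def unit_vec_def by simp

text \<open>The residual of the unit vector e_m after projecting onto an orthonormal family q_0..q_{n-1}
  has squared norm 1 - \<Sum>_i |q_i m|^2; summing over m gives n - n, so every residual vanishes.\<close>

lemma sqnorm_unit_vec_residual: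
  assumes oq: "orthonormal_n n q" and m: "m < n"
  shows "sqnorm_n n (\<lambda>k. unit_vec m k - (\<Sum>i<n. cnj (q i m) * q i k))
         = 1 - (\<Sum>i<n. (cmod (q i m))^2)"
proof -
  define r where "r k = unit_vec m k - (\<Sum>i<n. cnj (q i m) * q i k)" for k
  have r_orth: "inner_n n r (q j) = 0" if "j < n" for j
  proof -
    have "(\<Sum>i<n. cnj (q i m) * inner_n n (q i) (q j)) = (\<Sum>i<n. if i = j then cnj (q i m) else 0)"
      using oq that by (intro sum.cong refl) (auto simp: orthonormal_n_def)
    then have "(\<Sum>i<n. cnj (q i m) * inner_n n (q i) (q j)) = cnj (q j m)"
      using that by simp
    then show ?thesis
      using m unfolding r_def[abs_def] by (simp add: inner_n_diff_left inner_n_sum_left inner_n_unit_vec_left)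
  qed
  have r_eq: "r = (\<lambda>k. unit_vec m k - (\<Sum>i<n. cnj (q i m) * q i k))"
    by (rule ext) (simp add: r_def)
  have "inner_n n r r = inner_n n r (unit_vec m) - inner_n n r (\<lambda>k. \<Sum>i<n. cnj (q i m) * q i k)"
    by (subst (2) r_eq) (rule inner_n_diff_right)
  also have "inner_n n r (\<lambda>k. \<Sum>i<n. cnj (q i m) * q i k) = 0"
    by (simp add: inner_n_sum_right r_orth)
  also have "inner_n n r (unit_vec m) = r m"
    using m by (rule inner_n_unit_vec_right)
  also have "r m = 1 - (\<Sum>i<n. cnj (q i m) * q i m)"
    by (simp add: r_def unit_vec_def)
  also have "(\<Sum>i<n. cnj (q i m) * q i m) = of_real (\<Sum>i<n. (cmod (q i m))^2)"
    unfolding of_real_sum by (intro sum.cong refl) (metis complex_norm_square mult.commute)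
  finally have "of_real (sqnorm_n n r) = (of_real (1 - (\<Sum>i<n. (cmod (q i m))^2)) :: complex)"
    by (simp add: inner_n_self)
  then show ?thesis
    unfolding r_eq[symmetric] of_real_eq_iff .
qed

lemma orthonormal_rows:
  assumes oq: "orthonormal_n n q" and a: "a < n" and b: "b < n"
  shows "(\<Sum>i<n. q i a * cnj (q i b)) = (if a = b then 1 else 0)"
proof -
  define r where "r m k = unit_vec m k - (\<Sum>i<n. cnj (q i m) * q i k)" for m k
  have "(\<Sum>m<n. sqnorm_n n (r m)) = (\<Sum>m<n. 1 - (\<Sum>i<n. (cmod (q i m))^2))"
    unfolding r_def using sqnorm_unit_vec_residual[OF oq] by simp
  also have "\<dots> = real n - (\<Sum>i<n. sqnorm_n n (q i))"
    by (simp add: sum_subtractf sqnorm_n_def) (rule sum.swap)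
  also have "(\<Sum>i<n. sqnorm_n n (q i)) = real n"
    using oq by (simp add: orthonormal_n_def sqnorm_n_eq_1_if_inner)
  finally have "(\<Sum>m<n. sqnorm_n n (r m)) = 0" by simp
  then have "sqnorm_n n (r b) = 0"
    using b by (subst (asm) sum_nonneg_eq_0_iff) (auto simp: sqnorm_n_nonneg)
  then have "r b a = 0" using a by (rule sqnorm_n_eq_0D)
  then show ?thesis by (simp add: r_def unit_vec_def mult.commute)
qed

lemma orthonormal_expansion:
  assumes oq: "orthonormal_n n q" and l: "l < n"
  shows "(\<Sum>i<n. inner_n n y (q i) * q i l) = y l"
proof -
  have "(\<Sum>i<n. inner_n n y (q i) * q i l) = (\<Sum>m<n. y m * (\<Sum>i<n. q i l * cnj (q i m)))"
    unfolding inner_n_def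
    by (simp add: sum_distrib_left sum_distrib_right mult_ac) (rule sum.swap)
  also have "\<dots> = (\<Sum>m<n. if m = l then y m else 0)"
    using l by (intro sum.cong refl) (auto simp: orthonormal_rows[OF oq])
  finally show ?thesis using l by simp
qed

lemma parseval_n:
  assumes "orthonormal_n n q"
  shows "(\<Sum>i<n. inner_n n x (q i) * cnj (inner_n n y (q i))) = inner_n n x y"
proof -
  have "inner_n n x y = inner_n n x (\<lambda>l. \<Sum>i<n. inner_n n y (q i) * q i l)"
    using orthonormal_expansion[OF assms] by (intro inner_n_cong) auto
  also have "\<dots> = (\<Sum>i<n. cnj (inner_n n y (q i)) * inner_n n x (q i))"
    by (rule inner_n_sum_right)
  finally show ?thesis by (simp add: mult.commute)
qed

section \<open>Multiplication operators\<close>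

definition diag_mult :: "(nat \<Rightarrow> complex) \<Rightarrow> (nat \<Rightarrow> complex) \<Rightarrow> nat \<Rightarrow> complex" where
  "diag_mult \<xi> x = (\<lambda>k. \<xi> k * x k)"

definition unitary_n :: "nat \<Rightarrow> (nat \<Rightarrow> nat \<Rightarrow> complex) \<Rightarrow> bool" where
  "unitary_n n C \<longleftrightarrow>
     (\<forall>i<n. \<forall>j<n. (\<Sum>k<n. C i k * cnj (C j k)) = (if i = j then 1 else 0)) \<and>
     (\<forall>i<n. \<forall>j<n. (\<Sum>k<n. cnj (C k i) * C k j) = (if i = j then 1 else 0))"

definition mult_matrix :: "nat \<Rightarrow> (nat \<Rightarrow> complex) \<Rightarrow> (nat \<Rightarrow> nat \<Rightarrow> complex) \<Rightarrow> nat \<Rightarrow> nat \<Rightarrow> complex" where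
  "mult_matrix n \<xi> q i j = (if i < n \<and> j < n then inner_n n (diag_mult \<xi> (q j)) (q i) else 0)"

lemma inner_n_diag_mult_adjoint: "inner_n n (diag_mult \<xi> x) y = inner_n n x (diag_mult (\<lambda>k. cnj (\<xi> k)) y)"
  unfolding inner_n_def diag_mult_def by (simp add: mult_ac)

lemma inner_n_diag_mult_unimodular:
  assumes "\<forall>k<n. cmod (\<xi> k) = 1"
  shows "inner_n n (diag_mult \<xi> x) (diag_mult \<xi> y) = inner_n n x y"
  unfolding inner_n_def diag_mult_def
proof (intro sum.cong refl)
  fix k assume "k \<in> {..<n}"
  then have "\<xi> k * cnj (\<xi> k) = 1" using assms by (simp add: mult_cnj_self)
  then show "\<xi> k * x k * cnj (\<xi> k * y k) = x k * cnj (y k)"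
    by (simp add: mult_ac)
qed

lemma unitary_mult_matrix:
  assumes oq: "orthonormal_n n q" and xi: "\<forall>k<n. cmod (\<xi> k) = 1"
  shows "unitary_n n (mult_matrix n \<xi> q)"
proof -
  have xi': "\<forall>k<n. cmod (cnj (\<xi> k)) = 1" using xi by simp
  have cc: "\<xi> = (\<lambda>k. cnj (cnj (\<xi> k)))" by simp
  have 1: "(\<Sum>k<n. mult_matrix n \<xi> q i k * cnj (mult_matrix n \<xi> q j k)) = (if i = j then 1 else 0)"
    if "i < n" "j < n" for i j
  proof -
    have "(\<Sum>k<n. mult_matrix n \<xi> q i k * cnj (mult_matrix n \<xi> q j k))
        = (\<Sum>k<n. inner_n n (diag_mult (\<lambda>k. cnj (\<xi> k)) (q j)) (q k) * cnj (inner_n n (diag_mult (\<lambda>k. cnj (\<xi> k)) (q i)) (q k)))"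
    proof (intro sum.cong refl)
      fix k assume k: "k \<in> {..<n}"
      have a: "inner_n n (diag_mult \<xi> (q k)) (q i) = cnj (inner_n n (diag_mult (\<lambda>k. cnj (\<xi> k)) (q i)) (q k))"
        by (subst inner_n_diag_mult_adjoint, rule inner_n_commute)
      have b: "inner_n n (diag_mult \<xi> (q k)) (q j) = cnj (inner_n n (diag_mult (\<lambda>k. cnj (\<xi> k)) (q j)) (q k))"
        by (subst inner_n_diag_mult_adjoint, rule inner_n_commute)
      show "mult_matrix n \<xi> q i k * cnj (mult_matrix n \<xi> q j k) = inner_n n (diag_mult (\<lambda>k. cnj (\<xi> k)) (q j)) (q k) * cnj (inner_n n (diag_mult (\<lambda>k. cnj (\<xi> k)) (q i)) (q k))"
        using k that by (simp add: mult_matrix_def a b mult.commute)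
    qed
    also have "\<dots> = inner_n n (diag_mult (\<lambda>k. cnj (\<xi> k)) (q j)) (diag_mult (\<lambda>k. cnj (\<xi> k)) (q i))"
      by (rule parseval_n[OF oq])
    also have "\<dots> = inner_n n (q j) (q i)" by (rule inner_n_diag_mult_unimodular[OF xi'])
    finally show ?thesis using oq that unfolding orthonormal_n_def by auto
  qed
  have 2: "(\<Sum>k<n. cnj (mult_matrix n \<xi> q k i) * mult_matrix n \<xi> q k j) = (if i = j then 1 else 0)"
    if "i < n" "j < n" for i j
  proof -
    have "(\<Sum>k<n. cnj (mult_matrix n \<xi> q k i) * mult_matrix n \<xi> q k j)
        = (\<Sum>k<n. inner_n n (diag_mult \<xi> (q j)) (q k) * cnj (inner_n n (diag_mult \<xi> (q i)) (q k)))"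
      using that by (intro sum.cong refl) (simp add: mult_matrix_def mult.commute)
    also have "\<dots> = inner_n n (diag_mult \<xi> (q j)) (diag_mult \<xi> (q i))"
      by (rule parseval_n[OF oq])
    also have "\<dots> = inner_n n (q j) (q i)" by (rule inner_n_diag_mult_unimodular[OF xi])
    finally show ?thesis using oq that unfolding orthonormal_n_def by auto
  qed
  show ?thesis unfolding unitary_n_def using 1 2 by blast
qed

lemma e_last_unit_vec: "e_last n = unit_vec (n - 1)"
  by (rule ext) (simp add: e_last_def unit_vec_def)

lemma spectral_measure_mult_matrix:
  assumes oq: "orthonormal_n n q" and n: "n \<ge> 1"
  shows "spectral_measure n (mult_matrix n \<xi> q) (e_last n)
           (\<lambda>z. \<Sum>l\<in>{l. l < n \<and> \<xi> l = z}. (cmod (q (n - 1) l))^2)"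
proof -
  define h where "h l i = (if i < n then cnj (q i l) else 0)" for l i
  have eig: "(\<Sum>k<n. mult_matrix n \<xi> q i k * h l k) = \<xi> l * h l i" if "l < n" "i < n" for l i
  proof -
    have "(\<Sum>k<n. mult_matrix n \<xi> q i k * h l k) = (\<Sum>k<n. cnj (q k l) * inner_n n (diag_mult \<xi> (q k)) (q i))"
      using that by (intro sum.cong refl) (simp add: mult_matrix_def h_def mult.commute)
    also have "\<dots> = inner_n n (\<lambda>t. \<Sum>k<n. cnj (q k l) * diag_mult \<xi> (q k) t) (q i)"
      by (rule inner_n_sum_left[symmetric])
    also have "(\<lambda>t. \<Sum>k<n. cnj (q k l) * diag_mult \<xi> (q k) t) = (\<lambda>t. \<xi> t * (\<Sum>k<n. inner_n n (unit_vec l) (q k) * q k t))"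
      using that by (simp add: diag_mult_def inner_n_unit_vec_left sum_distrib_left mult_ac)
    also have "inner_n n \<dots> (q i) = inner_n n (\<lambda>t. \<xi> l * unit_vec l t) (q i)"
    proof -
      have "\<xi> t * (\<Sum>k<n. inner_n n (unit_vec l) (q k) * q k t) * cnj (q i t) = \<xi> l * unit_vec l t * cnj (q i t)"
        if "t \<in> {..<n}" for t
        using that by (simp add: orthonormal_expansion[OF oq] unit_vec_def)
      then show ?thesis unfolding inner_n_def by (rule sum.cong[OF refl])
    qed
    also have "\<dots> = \<xi> l * cnj (q i l)" using that by (simp add: inner_n_scale_left inner_n_unit_vec_left)
    finally show ?thesis using that by (simp add: h_def)
  qed
  have ort: "inner_n n (h j) (h l) = (if j = l then 1 else 0)" if "j < n" "l < n" for j l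
  proof -
    have "inner_n n (h j) (h l) = (\<Sum>i<n. inner_n n (unit_vec j) (q i) * cnj (inner_n n (unit_vec l) (q i)))"
    proof -
      have "h j i * cnj (h l i) = inner_n n (unit_vec j) (q i) * cnj (inner_n n (unit_vec l) (q i))"
        if "i \<in> {..<n}" for i
        using that \<open>j < n\<close> \<open>l < n\<close> by (simp add: h_def inner_n_unit_vec_left)
      then show ?thesis unfolding inner_n_def[of n "h j"] by (rule sum.cong[OF refl])
    qed
    also have "\<dots> = inner_n n (unit_vec j) (unit_vec l)" by (rule parseval_n[OF oq])
    finally show ?thesis using that by (simp add: inner_n_unit_vec_right unit_vec_def)
  qed
  have w: "inner_n n (h j) (e_last n) = cnj (q (n - 1) j)" for j
  proof -
    have "inner_n n (h j) (e_last n) = inner_n n (h j) (unit_vec (n - 1))"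
      by (simp add: e_last_unit_vec)
    also have "\<dots> = cnj (q (n - 1) j)" using n by (simp add: inner_n_unit_vec_right h_def)
    finally show ?thesis .
  qed
  show ?thesis unfolding spectral_measure_def
    apply (rule exI[of _ h], rule exI[of _ \<xi>])
    using eig ort by (simp add: w)
qed

definition vec_subspace :: "nat \<Rightarrow> ((nat \<Rightarrow> complex) \<Rightarrow> bool) \<Rightarrow> bool" where
  "vec_subspace n S \<longleftrightarrow> (\<forall>x x'. S x \<longrightarrow> (\<forall>t<n. x t = x' t) \<longrightarrow> S x')
     \<and> (\<forall>x y a. S x \<longrightarrow> S y \<longrightarrow> S (\<lambda>t. x t + a * y t))"

lemma vec_subspaceD:
  assumes "vec_subspace n S"
  shows vec_subspace_cong: "S x \<Longrightarrow> (\<forall>t<n. x t = x' t) \<Longrightarrow> S x'"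
    and vec_subspace_add_scaled: "S x \<Longrightarrow> S y \<Longrightarrow> S (\<lambda>t. x t + a * y t)"
    and vec_subspace_scale: "S x \<Longrightarrow> S (\<lambda>t. a * x t)"
proof -
  show cong: "S x \<Longrightarrow> (\<forall>t<n. x t = x' t) \<Longrightarrow> S x'" for x x'
    using assms unfolding vec_subspace_def by blast
  show add: "S x \<Longrightarrow> S y \<Longrightarrow> S (\<lambda>t. x t + a * y t)" for x y a
    using assms unfolding vec_subspace_def by blast
  show "S x \<Longrightarrow> S (\<lambda>t. a * x t)"
  proof -
    assume Sx: "S x"
    have "S (\<lambda>t. (x t + (- 1) * x t) + a * x t)" by (intro add Sx)
    then show ?thesis by (rule cong) simp
  qed
qed

text \<open>The vector \<Prod>_{m \<noteq> l} (\<eta> - \<eta> m) v is a nonzero multiple of e_l: a space containing v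
  with nonvanishing coordinates and invariant under a multiplication operator with simple
  spectrum contains every unit vector.\<close>

lemma invariant_subspace_contains_unit_vec:
  assumes S: "vec_subspace n S" and inj: "inj_on \<eta> {..<n}" and vnz: "\<forall>k<n. v k \<noteq> 0"
    and Sv: "S v" and Sd: "\<And>x. S x \<Longrightarrow> S (diag_mult \<eta> x)" and l: "l < n"
  shows "S (unit_vec l)"
proof -
  have P: "S (\<lambda>t. (\<Prod>m\<in>A. (\<eta> t - \<eta> m)) * v t)" if "finite A" for A
    using that
  proof (induction A rule: finite_induct)
    case empty then show ?case using Sv by simp
  next
    case (insert m A)
    have "S (\<lambda>t. diag_mult \<eta> (\<lambda>t. (\<Prod>m\<in>A. (\<eta> t - \<eta> m)) * v t) t + (- \<eta> m) * ((\<Prod>m\<in>A. (\<eta> t - \<eta> m)) * v t))"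
      using vec_subspace_add_scaled[OF S Sd[OF insert.IH] insert.IH] .
    moreover have "(\<lambda>t. diag_mult \<eta> (\<lambda>t. (\<Prod>m\<in>A. (\<eta> t - \<eta> m)) * v t) t + (- \<eta> m) * ((\<Prod>m\<in>A. (\<eta> t - \<eta> m)) * v t))
       = (\<lambda>t. (\<Prod>m\<in>insert m A. (\<eta> t - \<eta> m)) * v t)"
      using insert by (auto simp: diag_mult_def algebra_simps)
    ultimately show ?case by simp
  qed
  define A where "A = {..<n} - {l}"
  define w where "w t = (\<Prod>m\<in>A. (\<eta> t - \<eta> m)) * v t" for t
  have Sw: "S w" using P[of A] unfolding w_def A_def by simp
  have wl: "w l \<noteq> 0"
  proof -
    have "(\<Prod>m\<in>A. (\<eta> l - \<eta> m)) \<noteq> 0"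
      using inj l by (auto simp: A_def inj_on_def)
    then show ?thesis using vnz l by (simp add: w_def)
  qed
  have wt: "w t = 0" if "t < n" "t \<noteq> l" for t
  proof -
    have "t \<in> A" using that by (simp add: A_def)
    then have "(\<Prod>m\<in>A. (\<eta> t - \<eta> m)) = 0" by (intro prod_zero) (auto simp: A_def)
    then show ?thesis by (simp add: w_def)
  qed
  have "S (\<lambda>t. inverse (w l) * w t)" by (rule vec_subspace_scale[OF S Sw])
  moreover have "\<forall>t<n. inverse (w l) * w t = unit_vec l t"
    using wl wt by (auto simp: unit_vec_def)
  ultimately show ?thesis by (rule vec_subspace_cong[OF S])
qed

lemma card_orthonormal_spanning:
  assumes I: "I \<subseteq> {..<n}"
    and orth: "\<forall>i\<in>I. \<forall>j\<in>I. inner_n n (q i) (q j) = (if i = j then 1 else 0)"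
    and span: "\<forall>l<n. \<forall>t<n. unit_vec l t = (\<Sum>i\<in>I. inner_n n (unit_vec l) (q i) * q i t)"
  shows "card I = n"
proof -
  have one: "(\<Sum>i\<in>I. (cmod (q i l))^2) = 1" if l: "l < n" for l
  proof -
    have "(1::complex) = (\<Sum>i\<in>I. cnj (q i l) * q i l)"
      using span[rule_format, OF l l] l by (simp add: unit_vec_def inner_n_unit_vec_left)
    also have "\<dots> = of_real (\<Sum>i\<in>I. (cmod (q i l))^2)"
      unfolding of_real_sum by (intro sum.cong refl) (metis complex_norm_square mult.commute)
    finally show ?thesis by (metis of_real_eq_1_iff)
  qed
  have "real n = (\<Sum>l<n. (\<Sum>i\<in>I. (cmod (q i l))^2))" using one by simp
  also have "\<dots> = (\<Sum>i\<in>I. sqnorm_n n (q i))" unfolding sqnorm_n_def by (rule sum.swap)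
  also have "\<dots> = (\<Sum>i\<in>I. 1)"
    using orth by (intro sum.cong refl) (simp add: sqnorm_n_eq_1_if_inner)
  finally show ?thesis by simp
qed

section \<open>The CMV basis\<close>

text \<open>The CMV basis of L^2(\<mu>) for \<mu> = \<Sum>_l |v_l|^2 \<delta>(\<xi>_l), indexed backwards so that
  \<chi>_{n-1} = v: \<chi>_k is the normalized part of \<eta>_k \<chi>_{k+2} orthogonal to \<chi>_{k+1}, ..., \<chi>_{n-1},
  where \<eta>_k is \<xi> for even k and its conjugate for odd k. Thus \<chi>_{n-1}, \<chi>_{n-2}, ... arises from
  Gram-Schmidt applied to v, \<xi>^s v, \<xi>^(-s) v, \<xi>^(2s) v, ..., where s = \<plusminus>1 depends on the parity of n.\<close>

locale cmv_basis =
  fixes n :: nat and \<xi> :: "nat \<Rightarrow> complex" and v :: "nat \<Rightarrow> complex"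
  assumes n1: "n \<ge> 1" and xi1: "\<forall>k<n. cmod (\<xi> k) = 1" and inj: "inj_on \<xi> {..<n}"
    and vnz: "\<forall>k<n. v k \<noteq> 0" and vn: "sqnorm_n n v = 1"
begin

definition twist :: "nat \<Rightarrow> nat \<Rightarrow> complex" where
  "twist k = (if even k then \<xi> else (\<lambda>t. cnj (\<xi> t)))"

definition source_index :: "nat \<Rightarrow> nat" where
  "source_index k = (if k + 2 \<le> n - 1 then k + 2 else n - 1)"

function chi :: "nat \<Rightarrow> nat \<Rightarrow> complex" where
  "chi k = (if n \<le> k + 1 then v else
     (let u = diag_mult (twist k) (chi (source_index k));
          r = (\<lambda>t. u t - (\<Sum>i\<in>{k+1..<n}. inner_n n u (chi i) * chi i t))
      in (\<lambda>t. r t / of_real (sqrt (sqnorm_n n r)))))"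
  by auto
termination by (relation "measure (\<lambda>k. n - k)") (auto simp: source_index_def)

declare chi.simps [simp del]

definition shifted :: "nat \<Rightarrow> nat \<Rightarrow> complex" where
  "shifted k = diag_mult (twist k) (chi (source_index k))"

definition residual :: "nat \<Rightarrow> nat \<Rightarrow> complex" where
  "residual k = (\<lambda>t. shifted k t - (\<Sum>i\<in>{k+1..<n}. inner_n n (shifted k) (chi i) * chi i t))"

definition residual_norm :: "nat \<Rightarrow> real" where
  "residual_norm k = sqrt (sqnorm_n n (residual k))"

lemma chi_last: "n \<le> k + 1 \<Longrightarrow> chi k = v"
  by (simp add: chi.simps)

lemma chi_normalized: "k + 1 < n \<Longrightarrow> chi k = (\<lambda>t. residual k t / of_real (residual_norm k))"
  by (subst chi.simps) (simp add: Let_def residual_def shifted_def residual_norm_def)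

definition in_tail_span :: "nat \<Rightarrow> (nat \<Rightarrow> complex) \<Rightarrow> bool" where
  "in_tail_span k y \<longleftrightarrow> (\<forall>t<n. y t = (\<Sum>i\<in>{k..<n}. inner_n n y (chi i) * chi i t))"

definition orthonormal_tail :: "nat \<Rightarrow> bool" where
  "orthonormal_tail k \<longleftrightarrow> (\<forall>i j. k \<le> i \<longrightarrow> i < n \<longrightarrow> k \<le> j \<longrightarrow> j < n \<longrightarrow>
     inner_n n (chi i) (chi j) = (if i = j then 1 else 0))"

lemma orthonormal_tail_mono: "orthonormal_tail k \<Longrightarrow> k \<le> k' \<Longrightarrow> orthonormal_tail k'"
  unfolding orthonormal_tail_def by auto

lemma vec_subspace_tail_span: "vec_subspace n (in_tail_span k)"
proof -
  have "in_tail_span k x'" if "in_tail_span k x" "\<forall>t<n. x t = x' t" for x x'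
  proof -
    have "inner_n n x (chi i) = inner_n n x' (chi i)" for i using that(2) by (intro inner_n_cong) auto
    then show ?thesis using that unfolding in_tail_span_def by auto
  qed
  moreover have "in_tail_span k (\<lambda>t. x t + a * y t)" if "in_tail_span k x" "in_tail_span k y" for x y a
    using that unfolding in_tail_span_def
    by (simp add: inner_n_add_left inner_n_scale_left[of n a y] distrib_right sum.distrib
        sum_distrib_left mult.assoc)
  ultimately show ?thesis unfolding vec_subspace_def by blast
qed

lemma in_tail_span_zero: "in_tail_span k (\<lambda>t. 0)"
  unfolding in_tail_span_def inner_n_def by simp

lemma in_tail_span_combination:
  assumes "orthonormal_tail k"
  shows "in_tail_span k (\<lambda>t. \<Sum>i\<in>{k..<n}. c i * chi i t)"
proof -
  have "inner_n n (\<lambda>t. \<Sum>i\<in>{k..<n}. c i * chi i t) (chi j) = c j" if "j \<in> {k..<n}" for j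
  proof -
    have "inner_n n (\<lambda>t. \<Sum>i\<in>{k..<n}. c i * chi i t) (chi j) = (\<Sum>i\<in>{k..<n}. c i * inner_n n (chi i) (chi j))"
      by (rule inner_n_sum_left)
    also have "\<dots> = (\<Sum>i\<in>{k..<n}. if i = j then c i else 0)"
      using assms that unfolding orthonormal_tail_def by (intro sum.cong refl) auto
    finally show ?thesis using that by simp
  qed
  then show ?thesis unfolding in_tail_span_def by simp
qed

lemma in_tail_span_chi: "orthonormal_tail k \<Longrightarrow> k \<le> i \<Longrightarrow> i < n \<Longrightarrow> in_tail_span k (chi i)"
  using in_tail_span_combination[of k "\<lambda>j. if j = i then 1 else 0"] by (simp cong: if_cong)

lemma in_tail_span_orth:
  "in_tail_span m y \<Longrightarrow> (\<forall>i\<in>{m..<n}. inner_n n (chi i) (chi j) = 0) \<Longrightarrow> inner_n n y (chi j) = 0"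
proof -
  assume a: "in_tail_span m y" "\<forall>i\<in>{m..<n}. inner_n n (chi i) (chi j) = 0"
  have "inner_n n y (chi j) = inner_n n (\<lambda>t. \<Sum>i\<in>{m..<n}. inner_n n y (chi i) * chi i t) (chi j)"
    using a(1) unfolding in_tail_span_def by (intro inner_n_cong) auto
  also have "\<dots> = 0" using a(2) by (simp add: inner_n_sum_left)
  finally show ?thesis .
qed

lemma in_tail_span_Suc: "orthonormal_tail k \<Longrightarrow> in_tail_span (Suc k) y \<Longrightarrow> in_tail_span k y"
proof -
  assume a: "orthonormal_tail k" "in_tail_span (Suc k) y"
  show ?thesis
  proof (cases "k < n")
    case True
    have "inner_n n y (chi k) = 0"
      using a True by (intro in_tail_span_orth[OF a(2)]) (auto simp: orthonormal_tail_def)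
    then show ?thesis using a(2) True unfolding in_tail_span_def by (simp add: sum.atLeast_Suc_lessThan)
  qed (use a(2) in \<open>simp add: in_tail_span_def\<close>)
qed

lemma in_tail_span_beyond: "n \<le> k \<Longrightarrow> in_tail_span k y \<Longrightarrow> t < n \<Longrightarrow> y t = 0"
  unfolding in_tail_span_def by simp

lemma in_tail_span_split:
  assumes o: "orthonormal_tail (Suc k)" and k: "Suc k < n" and y: "in_tail_span (Suc k) y"
  shows "in_tail_span (Suc (Suc k)) (\<lambda>t. y t - inner_n n y (chi (Suc k)) * chi (Suc k) t)"
proof -
  define c where "c = inner_n n y (chi (Suc k))"
  have ip: "inner_n n (\<lambda>t. y t - c * chi (Suc k) t) (chi i) = inner_n n y (chi i)"
    if "i \<in> {Suc (Suc k)..<n}" for i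
    using o that by (simp add: inner_n_diff_left inner_n_scale_left orthonormal_tail_def)
  show ?thesis unfolding in_tail_span_def c_def[symmetric]
  proof (intro allI impI)
    fix t assume t: "t < n"
    have "y t = (\<Sum>i\<in>{Suc k..<n}. inner_n n y (chi i) * chi i t)"
      using y t unfolding in_tail_span_def by auto
    also have "\<dots> = c * chi (Suc k) t + (\<Sum>i\<in>{Suc (Suc k)..<n}. inner_n n y (chi i) * chi i t)"
      using k by (simp add: sum.atLeast_Suc_lessThan c_def)
    finally show "y t - c * chi (Suc k) t
        = (\<Sum>i\<in>{Suc (Suc k)..<n}. inner_n n (\<lambda>t. y t - c * chi (Suc k) t) (chi i) * chi i t)"
      using ip by simp
  qed
qed

lemma twist_Suc_Suc: "twist (Suc (Suc k)) = twist k"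
  by (simp add: twist_def)

lemma inj_on_twist: "inj_on (twist k) {..<n}"
  using inj by (auto simp: twist_def inj_on_def)

lemma twist_mult_Suc: "t < n \<Longrightarrow> twist k t * twist (Suc k) t = 1"
  using xi1 by (auto simp: twist_def mult_cnj_self mult.commute)

lemma diag_mult_twist_Suc: "t < n \<Longrightarrow> diag_mult (twist k) (diag_mult (twist (Suc k)) x) t = x t"
  using twist_mult_Suc[of t k] by (simp add: diag_mult_def mult.assoc[symmetric])

definition twist_maps_tail :: "nat \<Rightarrow> bool" where
  "twist_maps_tail k \<longleftrightarrow> (\<forall>m. k \<le> m \<longrightarrow> Suc m < n \<longrightarrow>
     (\<forall>y. in_tail_span (Suc m) y \<longrightarrow> in_tail_span m (diag_mult (twist m) y)))"

definition residual_pos_tail :: "nat \<Rightarrow> bool" where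
  "residual_pos_tail k \<longleftrightarrow> (\<forall>m. k \<le> m \<longrightarrow> Suc m < n \<longrightarrow> residual_norm m > 0)"

text \<open>A subspace S that
  contains the span of \<chi>_{k+1}, ..., \<chi>_{n-1} and the vector \<eta>_k \<chi>_{k+2} already contains
  \<eta>_k times that span: \<eta>_k \<chi>_{k+1} is recovered from \<chi>_{k+2} (or \<chi>_{k+3}) using \<eta>_k \<eta>_{k+1} = 1,
  and \<eta>_k \<chi>_j for j \<ge> k+3 lies in the span from k+2 on by the induction hypothesis.\<close>

context
  fixes k :: nat and S :: "(nat \<Rightarrow> complex) \<Rightarrow> bool"
  assumes k: "Suc k < n" and o1: "orthonormal_tail (Suc k)"
    and maps: "twist_maps_tail (Suc k)" and pos: "residual_pos_tail (Suc k)"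
    and S: "vec_subspace n S" and S_tail: "\<And>y. in_tail_span (Suc k) y \<Longrightarrow> S y"
    and S_shifted: "S (shifted k)"
begin

private lemma S_zero: "S (\<lambda>t. 0)"
  by (rule vec_subspace_cong[OF S vec_subspace_scale[OF S S_shifted, of 0]]) simp

private lemma S_twist_tail_Suc_Suc:
  assumes y: "in_tail_span (Suc (Suc k)) y"
  shows "S (diag_mult (twist k) y)"
proof (cases "n \<le> Suc (Suc k)")
  case True
  then show ?thesis
    using in_tail_span_beyond[OF True y] by (intro vec_subspace_cong[OF S S_zero]) (simp add: diag_mult_def)
next
  case False
  have o2: "orthonormal_tail (Suc (Suc k))" using orthonormal_tail_mono[OF o1] by simp
  define c where "c = inner_n n y (chi (Suc (Suc k)))"
  define y' where "y' t = y t - c * chi (Suc (Suc k)) t" for t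
  have y': "in_tail_span (Suc (Suc (Suc k))) y'"
    using in_tail_span_split[OF o2 _ y] False unfolding y'_def c_def by simp
  have sk: "source_index k = Suc (Suc k)" using False by (simp add: source_index_def)
  have "in_tail_span (Suc (Suc k)) (diag_mult (twist k) y')"
  proof (cases "Suc (Suc (Suc k)) < n")
    case True
    then have "in_tail_span (Suc (Suc k)) (diag_mult (twist (Suc (Suc k))) y')"
      using maps y' unfolding twist_maps_tail_def by auto
    then show ?thesis by (simp add: twist_Suc_Suc)
  next
    case False
    then show ?thesis
      using in_tail_span_beyond[OF _ y'] 
      by (intro vec_subspace_cong[OF vec_subspace_tail_span in_tail_span_zero]) (simp add: diag_mult_def)
  qed
  then have "S (\<lambda>t. diag_mult (twist k) y' t + c * shifted k t)"
    by (intro vec_subspace_add_scaled[OF S] S_tail S_shifted in_tail_span_Suc[OF o1])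
  moreover have "\<forall>t<n. diag_mult (twist k) y' t + c * shifted k t = diag_mult (twist k) y t"
    by (simp add: shifted_def sk diag_mult_def y'_def algebra_simps)
  ultimately show ?thesis by (rule vec_subspace_cong[OF S])
qed

private lemma S_twist_chi_Suc: "S (diag_mult (twist k) (chi (Suc k)))"
proof (cases "Suc (Suc k) = n")
  case True
  then have "source_index k = Suc k" by (auto simp: source_index_def)
  then show ?thesis using S_shifted by (simp add: shifted_def)
next
  case False
  then have k2: "Suc (Suc k) < n" using k by simp
  define r where "r = residual_norm (Suc k)"
  have r: "r > 0" using pos k2 unfolding residual_pos_tail_def r_def by auto
  define z where "z t = (\<Sum>i\<in>{Suc (Suc k)..<n}. inner_n n (shifted (Suc k)) (chi i) * chi i t)" for t
  have z: "in_tail_span (Suc (Suc k)) z"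
    unfolding z_def by (rule in_tail_span_combination[OF orthonormal_tail_mono[OF o1]]) simp
  define s where "s = source_index (Suc k)"
  have s: "Suc k \<le> s" "s < n" using k2 by (auto simp: s_def source_index_def)
  have "S (\<lambda>t. (1 / of_real r) * chi s t + (- 1 / of_real r) * diag_mult (twist k) z t)"
    by (intro vec_subspace_add_scaled[OF S] vec_subspace_scale[OF S] S_tail in_tail_span_chi[OF o1 s]
        S_twist_tail_Suc_Suc z)
  moreover have "\<forall>t<n. (1 / of_real r) * chi s t + (- 1 / of_real r) * diag_mult (twist k) z t
      = diag_mult (twist k) (chi (Suc k)) t"
  proof (intro allI impI)
    fix t assume t: "t < n"
    have "diag_mult (twist k) (chi (Suc k)) t = twist k t * ((shifted (Suc k) t - z t) / of_real r)"
      using k2 by (simp add: chi_normalized diag_mult_def residual_def z_def r_def)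
    also have "twist k t * shifted (Suc k) t = chi s t"
      using diag_mult_twist_Suc[OF t] by (simp add: shifted_def s_def diag_mult_def)
    then have "twist k t * ((shifted (Suc k) t - z t) / of_real r) = (chi s t - twist k t * z t) / of_real r"
      by (simp add: algebra_simps diff_divide_distrib)
    finally show "(1 / of_real r) * chi s t + (- 1 / of_real r) * diag_mult (twist k) z t
        = diag_mult (twist k) (chi (Suc k)) t"
      by (simp add: diag_mult_def diff_divide_distrib)
  qed
  ultimately show ?thesis by (rule vec_subspace_cong[OF S])
qed

lemma S_twist_tail:
  assumes y: "in_tail_span (Suc k) y"
  shows "S (diag_mult (twist k) y)"
proof -
  define c where "c = inner_n n y (chi (Suc k))"
  have "S (\<lambda>t. diag_mult (twist k) (\<lambda>t. y t - c * chi (Suc k) t) t + c * diag_mult (twist k) (chi (Suc k)) t)"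
    unfolding c_def
    by (intro vec_subspace_add_scaled[OF S] S_twist_tail_Suc_Suc in_tail_span_split[OF o1 k y]
        S_twist_chi_Suc)
  then show ?thesis by (rule vec_subspace_cong[OF S]) (simp add: diag_mult_def algebra_simps)
qed

end

text \<open>If the residual vanished, the span from k+1 on would contain v and be invariant under
  \<eta>_k, hence contain every unit vector; but it has dimension n - k - 1 < n.\<close>

lemma residual_norm_pos_step:
  assumes k: "Suc k < n" and o1: "orthonormal_tail (Suc k)"
    and maps: "twist_maps_tail (Suc k)" and pos: "residual_pos_tail (Suc k)"
  shows "residual_norm k > 0"
proof (rule ccontr)
  assume "\<not> residual_norm k > 0"
  then have "sqnorm_n n (residual k) = 0"
    using sqnorm_n_nonneg[of n "residual k"] by (simp add: residual_norm_def)
  then have "residual k t = 0" if "t < n" for t using sqnorm_n_eq_0D that by blast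
  then have shifted_tail: "in_tail_span (Suc k) (shifted k)"
    unfolding in_tail_span_def by (simp add: residual_def)
  have "in_tail_span (Suc k) (chi (n - 1))" using in_tail_span_chi[OF o1, of "n - 1"] k by simp
  then have v_tail: "in_tail_span (Suc k) v" using chi_last[of "n - 1"] by simp
  have "in_tail_span (Suc k) (unit_vec l)" if "l < n" for l
    using invariant_subspace_contains_unit_vec[OF vec_subspace_tail_span inj_on_twist vnz v_tail
        S_twist_tail[OF k o1 maps pos vec_subspace_tail_span _ shifted_tail] that] .
  moreover have "\<forall>i\<in>{Suc k..<n}. \<forall>j\<in>{Suc k..<n}. inner_n n (chi i) (chi j) = (if i = j then 1 else 0)"
    using o1 unfolding orthonormal_tail_def by auto
  ultimately have "card {Suc k..<n} = n"
    by (intro card_orthonormal_spanning) (auto simp: in_tail_span_def)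
  then show False using k by simp
qed

lemma orthonormal_tail_step:
  assumes k: "Suc k < n" and o1: "orthonormal_tail (Suc k)" and rpos: "residual_norm k > 0"
  shows "orthonormal_tail k"
proof -
  have ck: "chi k = (\<lambda>t. (1 / of_real (residual_norm k)) * residual k t)"
    using chi_normalized[of k] k by simp
  have "inner_n n (residual k) (chi j) = 0" if "j \<in> {Suc k..<n}" for j
  proof -
    have "(\<Sum>i\<in>{Suc k..<n}. inner_n n (shifted k) (chi i) * inner_n n (chi i) (chi j))
        = (\<Sum>i\<in>{Suc k..<n}. if i = j then inner_n n (shifted k) (chi i) else 0)"
      using o1 that unfolding orthonormal_tail_def by (intro sum.cong refl) auto
    then show ?thesis using that unfolding residual_def by (simp add: inner_n_diff_left inner_n_sum_left)
  qed
  then have ckj: "inner_n n (chi k) (chi j) = 0" if "j \<in> {Suc k..<n}" for j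
    using that unfolding ck inner_n_scale_left by simp
  have "inner_n n (chi k) (chi k)
      = (1 / of_real (residual_norm k)) * cnj (1 / of_real (residual_norm k)) * of_real (sqnorm_n n (residual k))"
    by (simp only: ck inner_n_scale_left inner_n_scale_right inner_n_self mult.assoc)
  also have "of_real (sqnorm_n n (residual k)) = (of_real (residual_norm k))^2"
    using sqnorm_n_nonneg[of n "residual k"] by (simp add: residual_norm_def flip: of_real_power)
  finally have ckk: "inner_n n (chi k) (chi k) = 1" using rpos by (simp add: power2_eq_square)
  show ?thesis
    unfolding orthonormal_tail_def
  proof (intro allI impI)
    fix i j assume a: "k \<le> i" "i < n" "k \<le> j" "j < n"
    consider "i = k" "j = k" | "i = k" "j \<noteq> k" | "i \<noteq> k" "j = k" | "i \<noteq> k" "j \<noteq> k" by blast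
    then show "inner_n n (chi i) (chi j) = (if i = j then 1 else 0)"
    proof cases
      case 3
      then show ?thesis using ckj[of i] a inner_n_commute[of n "chi i" "chi k"] by simp
    next
      case 4
      then show ?thesis using o1 a unfolding orthonormal_tail_def by auto
    qed (use ckk ckj a in auto)
  qed
qed

lemma in_tail_span_shifted:
  assumes k: "Suc k < n" and ok: "orthonormal_tail k" and rpos: "residual_norm k > 0"
  shows "in_tail_span k (shifted k)"
proof -
  define c where "c i = (if i = k then of_real (residual_norm k) else inner_n n (shifted k) (chi i))" for i
  have "in_tail_span k (\<lambda>t. \<Sum>i\<in>{k..<n}. c i * chi i t)" by (rule in_tail_span_combination[OF ok])
  moreover have "\<forall>t<n. (\<Sum>i\<in>{k..<n}. c i * chi i t) = shifted k t"
  proof (intro allI impI)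
    fix t assume t: "t < n"
    have "(\<Sum>i\<in>{k..<n}. c i * chi i t) = c k * chi k t + (\<Sum>i\<in>{Suc k..<n}. c i * chi i t)"
      using k by (simp add: sum.atLeast_Suc_lessThan)
    also have "(\<Sum>i\<in>{Suc k..<n}. c i * chi i t) = (\<Sum>i\<in>{Suc k..<n}. inner_n n (shifted k) (chi i) * chi i t)"
      by (intro sum.cong refl) (auto simp: c_def)
    also have "c k * chi k t = residual k t" using rpos k by (simp add: c_def chi_normalized)
    finally show "(\<Sum>i\<in>{k..<n}. c i * chi i t) = shifted k t" by (simp add: residual_def)
  qed
  ultimately show ?thesis by (rule vec_subspace_cong[OF vec_subspace_tail_span])
qed

lemma construction_invariants:
  "k \<le> n - 1 \<Longrightarrow> orthonormal_tail k \<and> twist_maps_tail k \<and> residual_pos_tail k"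
proof (induction k rule: inc_induct)
  case base
  have "inner_n n v v = 1" using vn by (simp add: inner_n_self)
  then have "orthonormal_tail (n - 1)" unfolding orthonormal_tail_def
  proof (intro allI impI)
    fix i j assume "inner_n n v v = 1" "n - 1 \<le> i" "i < n" "n - 1 \<le> j" "j < n"
    moreover then have "i = n - 1" "j = n - 1" by auto
    ultimately show "inner_n n (chi i) (chi j) = (if i = j then 1 else 0)"
      using chi_last[of "n - 1"] n1 by simp
  qed
  moreover have "twist_maps_tail (n - 1)" "residual_pos_tail (n - 1)"
    unfolding twist_maps_tail_def residual_pos_tail_def by auto
  ultimately show ?case by blast
next
  case (step k)
  then have k: "Suc k < n" and o1: "orthonormal_tail (Suc k)"
    and maps: "twist_maps_tail (Suc k)" and pos: "residual_pos_tail (Suc k)" by auto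
  have rpos: "residual_norm k > 0" by (rule residual_norm_pos_step[OF k o1 maps pos])
  have ok: "orthonormal_tail k" by (rule orthonormal_tail_step[OF k o1 rpos])
  have "in_tail_span k (diag_mult (twist k) y)" if "in_tail_span (Suc k) y" for y
    by (rule S_twist_tail[OF k o1 maps pos vec_subspace_tail_span in_tail_span_Suc[OF ok]
          in_tail_span_shifted[OF k ok rpos] that])
  then have "twist_maps_tail k" using maps unfolding twist_maps_tail_def by (metis le_antisym not_less_eq_eq)
  moreover have "residual_pos_tail k" using pos rpos unfolding residual_pos_tail_def by (metis le_antisym not_less_eq_eq)
  ultimately show ?case using ok by blast
qed

lemma orthonormal_tail_all: "orthonormal_tail k"
  using construction_invariants[of 0] orthonormal_tail_mono by blast

lemma orthonormal_chi: "orthonormal_n n chi"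
  using orthonormal_tail_all[of 0] unfolding orthonormal_tail_def orthonormal_n_def by auto

lemma residual_norm_pos: "Suc k < n \<Longrightarrow> residual_norm k > 0"
  using construction_invariants[of 0] unfolding residual_pos_tail_def by auto

lemma twist_maps_tail_into: "Suc m < n \<Longrightarrow> in_tail_span (Suc m) y \<Longrightarrow> in_tail_span m (diag_mult (twist m) y)"
  using construction_invariants[of 0] unfolding twist_maps_tail_def by auto

lemma inner_shifted_chi: "Suc k < n \<Longrightarrow> inner_n n (shifted k) (chi k) = of_real (residual_norm k)"
proof -
  assume k: "Suc k < n"
  have rne: "(of_real (residual_norm k) :: complex) \<noteq> 0" using residual_norm_pos[OF k] by simp
  have "inner_n n (shifted k) (chi k)
      = inner_n n (\<lambda>t. residual k t + (\<Sum>i\<in>{k+1..<n}. inner_n n (shifted k) (chi i) * chi i t)) (chi k)"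
    by (simp add: residual_def)
  also have "\<dots> = inner_n n (residual k) (chi k)
      + (\<Sum>i\<in>{k+1..<n}. inner_n n (shifted k) (chi i) * inner_n n (chi i) (chi k))"
    by (simp add: inner_n_add_left inner_n_sum_left)
  also have "(\<Sum>i\<in>{k+1..<n}. inner_n n (shifted k) (chi i) * inner_n n (chi i) (chi k)) = 0"
    using orthonormal_tail_all[of 0] unfolding orthonormal_tail_def by (intro sum.neutral) auto
  also have "residual k = (\<lambda>t. of_real (residual_norm k) * chi k t)" using k rne by (simp add: chi_normalized)
  also have "inner_n n (\<lambda>t. of_real (residual_norm k) * chi k t) (chi k) = of_real (residual_norm k)"
    using orthonormal_tail_all[of 0] k unfolding orthonormal_tail_def by (simp add: inner_n_scale_left)
  finally show ?thesis by simp
qed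

end

section \<open>Matrices and the factorization of CMV matrices\<close>

definition mat_mult :: "nat \<Rightarrow> (nat \<Rightarrow> nat \<Rightarrow> complex) \<Rightarrow> (nat \<Rightarrow> nat \<Rightarrow> complex) \<Rightarrow> nat \<Rightarrow> nat \<Rightarrow> complex" where
  "mat_mult n A B i j = (\<Sum>k<n. A i k * B k j)"

definition mat_adj :: "(nat \<Rightarrow> nat \<Rightarrow> complex) \<Rightarrow> nat \<Rightarrow> nat \<Rightarrow> complex" where
  "mat_adj A i j = cnj (A j i)"

definition mat_id :: "nat \<Rightarrow> nat \<Rightarrow> nat \<Rightarrow> complex" where
  "mat_id n i j = (if i < n \<and> j = i then 1 else 0)"

definition zero_outside :: "nat \<Rightarrow> (nat \<Rightarrow> nat \<Rightarrow> complex) \<Rightarrow> bool" where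
  "zero_outside n A \<longleftrightarrow> (\<forall>i j. n \<le> i \<or> n \<le> j \<longrightarrow> A i j = 0)"

definition one_dsum :: "(nat \<Rightarrow> nat \<Rightarrow> complex) \<Rightarrow> nat \<Rightarrow> nat \<Rightarrow> complex" where
  "one_dsum X i j = (if i = 0 \<and> j = 0 then 1 else if 0 < i \<and> 0 < j then X (i - 1) (j - 1) else 0)"

definition theta_block :: "nat \<Rightarrow> complex \<Rightarrow> nat \<Rightarrow> nat \<Rightarrow> complex" where
  "theta_block n a i j = (if i < n \<and> j < n then (if i < 2 \<and> j < 2 then Theta a i j else if i = j then 1 else 0) else 0)"

lemma mat_mult_assoc: "mat_mult n (mat_mult n A B) C = mat_mult n A (mat_mult n B C)"
proof (intro ext)
  fix i j
  have "mat_mult n (mat_mult n A B) C i j = (\<Sum>l<n. \<Sum>k<n. A i k * B k l * C l j)"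
    by (simp add: mat_mult_def sum_distrib_right)
  also have "\<dots> = (\<Sum>k<n. \<Sum>l<n. A i k * B k l * C l j)" by (rule sum.swap)
  also have "\<dots> = mat_mult n A (mat_mult n B C) i j"
    by (simp add: mat_mult_def sum_distrib_left mult.assoc)
  finally show "mat_mult n (mat_mult n A B) C i j = mat_mult n A (mat_mult n B C) i j" .
qed

lemma sum_delta_conj: "(\<Sum>k<(n::nat). if P \<and> k = i then f k else 0) = (if P \<and> i < n then f i else (0::complex))"
  by (cases P) simp_all

lemma mat_mult_id_left: "zero_outside n A \<Longrightarrow> mat_mult n (mat_id n) A = A"
  by (intro ext) (auto simp: mat_mult_def mat_id_def zero_outside_def sum_delta_conj)

lemma mat_mult_id_right: "zero_outside n A \<Longrightarrow> mat_mult n A (mat_id n) = A"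
proof (intro ext)
  fix i j assume "zero_outside n A"
  have "(\<Sum>k<n. A i k * (if k < n \<and> j = k then 1 else 0)) = (\<Sum>k<n. if j < n \<and> k = j then A i k else 0)"
    by (intro sum.cong) auto
  then show "mat_mult n A (mat_id n) i j = A i j" using \<open>zero_outside n A\<close>
    by (auto simp: mat_mult_def mat_id_def zero_outside_def sum_delta_conj)
qed

lemma zero_outside_mat_mult: "zero_outside n A \<Longrightarrow> zero_outside n B \<Longrightarrow> zero_outside n (mat_mult n A B)"
  by (auto simp: zero_outside_def mat_mult_def)

lemma zero_outside_mat_adj: "zero_outside n A \<Longrightarrow> zero_outside n (mat_adj A)"
  by (auto simp: zero_outside_def mat_adj_def)

lemma unitary_n_iff_mat_mult: "unitary_n n A \<longleftrightarrow>
   (\<forall>i<n. \<forall>j<n. mat_mult n A (mat_adj A) i j = mat_id n i j) \<and> (\<forall>i<n. \<forall>j<n. mat_mult n (mat_adj A) A i j = mat_id n i j)"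
  unfolding unitary_n_def mat_mult_def mat_adj_def mat_id_def by auto

lemma unitary_n_mat_mult_adj: "unitary_n n A \<Longrightarrow> zero_outside n A \<Longrightarrow> mat_mult n A (mat_adj A) = mat_id n \<and> mat_mult n (mat_adj A) A = mat_id n"
proof -
  assume u: "unitary_n n A" and b: "zero_outside n A"
  have b1: "zero_outside n (mat_mult n A (mat_adj A))" "zero_outside n (mat_mult n (mat_adj A) A)" using b by (auto intro: zero_outside_mat_mult zero_outside_mat_adj)
  show ?thesis
  proof
    show "mat_mult n A (mat_adj A) = mat_id n"
    proof (intro ext)
      fix i j show "mat_mult n A (mat_adj A) i j = mat_id n i j"
        using u b1(1) unfolding unitary_n_iff_mat_mult zero_outside_def by (cases "i < n \<and> j < n") (auto simp: mat_id_def)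
    qed
    show "mat_mult n (mat_adj A) A = mat_id n"
    proof (intro ext)
      fix i j show "mat_mult n (mat_adj A) A i j = mat_id n i j"
        using u b1(2) unfolding unitary_n_iff_mat_mult zero_outside_def by (cases "i < n \<and> j < n") (auto simp: mat_id_def)
    qed
  qed
qed

lemma mat_adj_mat_mult: "mat_adj (mat_mult n A B) = mat_mult n (mat_adj B) (mat_adj A)"
  by (intro ext) (simp add: mat_adj_def mat_mult_def mult.commute)

lemma unitary_n_mat_mult:
  assumes "unitary_n n A" "zero_outside n A" "unitary_n n B" "zero_outside n B"
  shows "unitary_n n (mat_mult n A B)"
proof -
  have a: "mat_mult n A (mat_adj A) = mat_id n" "mat_mult n (mat_adj A) A = mat_id n" using unitary_n_mat_mult_adj assms(1,2) by auto
  have b: "mat_mult n B (mat_adj B) = mat_id n" "mat_mult n (mat_adj B) B = mat_id n" using unitary_n_mat_mult_adj assms(3,4) by auto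
  have "mat_mult n (mat_mult n A B) (mat_adj (mat_mult n A B)) = mat_mult n A (mat_mult n (mat_mult n B (mat_adj B)) (mat_adj A))"
    by (simp only: mat_adj_mat_mult mat_mult_assoc)
  also have "\<dots> = mat_id n" by (simp add: b mat_mult_id_left zero_outside_mat_adj assms a)
  finally have 1: "mat_mult n (mat_mult n A B) (mat_adj (mat_mult n A B)) = mat_id n" .
  have "mat_mult n (mat_adj (mat_mult n A B)) (mat_mult n A B) = mat_mult n (mat_adj B) (mat_mult n (mat_mult n (mat_adj A) A) B)"
    by (simp only: mat_adj_mat_mult mat_mult_assoc)
  also have "\<dots> = mat_id n" by (simp add: a mat_mult_id_left assms b)
  finally have 2: "mat_mult n (mat_adj (mat_mult n A B)) (mat_mult n A B) = mat_id n" .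
  from 1 2 show ?thesis unfolding unitary_n_iff_mat_mult by simp
qed

lemma Theta_sym: "r < 2 \<Longrightarrow> c < 2 \<Longrightarrow> Theta a r c = Theta a c r"
  by (auto simp: Theta_def)

lemma cmv_L_sym: "cmv_L n \<alpha> \<beta> i j = cmv_L n \<alpha> \<beta> j i"
  unfolding cmv_L_def by (auto intro: Theta_sym)

lemma cmv_M_sym: "cmv_M n \<alpha> \<beta> i j = cmv_M n \<alpha> \<beta> j i"
  unfolding cmv_M_def by (auto intro: Theta_sym)

lemma zero_outside_cmv_L: "zero_outside n (cmv_L n \<alpha> \<beta>)" by (auto simp: zero_outside_def cmv_L_def)
lemma zero_outside_cmv_M: "zero_outside n (cmv_M n \<alpha> \<beta>)" by (auto simp: zero_outside_def cmv_M_def)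
lemma zero_outside_cmv: "zero_outside n (cmv n \<alpha> \<beta>)" by (auto simp: zero_outside_def cmv_def cmv_L_def cmv_M_def)

lemma cmv_eq_mat_mult: "cmv n \<alpha> \<beta> = mat_mult n (cmv_L n \<alpha> \<beta>) (cmv_M n \<alpha> \<beta>)"
  by (intro ext) (simp add: cmv_def mat_mult_def)

lemma mat_mult_one_dsum:
  assumes "zero_outside m X" "zero_outside m Y"
  shows "mat_mult (Suc m) (one_dsum X) (one_dsum Y) = one_dsum (mat_mult m X Y)"
proof (intro ext)
  fix i j
  have "mat_mult (Suc m) (one_dsum X) (one_dsum Y) i j = one_dsum X i 0 * one_dsum Y 0 j + (\<Sum>k<m. one_dsum X i (Suc k) * one_dsum Y (Suc k) j)"
    unfolding mat_mult_def by (rule sum.lessThan_Suc_shift)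
  then show "mat_mult (Suc m) (one_dsum X) (one_dsum Y) i j = one_dsum (mat_mult m X Y) i j"
    using assms by (auto simp: one_dsum_def mat_mult_def zero_outside_def)
qed

lemma cmv_M_Suc:
  assumes "1 \<le> m"
  shows "cmv_M (Suc m) \<alpha> \<beta> = one_dsum (cmv_L m (\<lambda>j. \<alpha> (Suc j)) \<beta>)"
proof (intro ext)
  fix i j
  show "cmv_M (Suc m) \<alpha> \<beta> i j = one_dsum (cmv_L m (\<lambda>j. \<alpha> (Suc j)) \<beta>) i j"
  proof (cases "i = 0 \<or> j = 0")
    case True
    then show ?thesis using assms by (auto simp: cmv_M_def one_dsum_def cmv_L_def)
  next
    case False
    then obtain i' j' where ij: "i = Suc i'" "j = Suc j'" by (metis not0_implies_Suc)
    have e1: "(2 * (i' div 2) + 2 < Suc m) = (2 * (i' div 2) + 1 < m)" by arith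
    show ?thesis using assms unfolding ij cmv_M_def one_dsum_def cmv_L_def
      by (auto simp: e1)
  qed
qed

lemma sum_lessThan_Suc_Suc_shift: "(\<Sum>k<Suc (Suc m). g k) = g 0 + g 1 + (\<Sum>k<m. g (Suc (Suc k)))"
  by (simp add: sum.lessThan_Suc_shift add.assoc del: sum.lessThan_Suc)

lemma mat_mult_theta_block:
  assumes "2 \<le> N"
  shows "mat_mult N (theta_block N a) X i j = (if i < 2 then Theta a i 0 * X 0 j + Theta a i 1 * X 1 j else if i < N then X i j else 0)"
proof -
  obtain m where N: "N = Suc (Suc m)" using assms by (metis add_2_eq_Suc le_Suc_ex)
  show ?thesis
  proof (cases "i < 2")
    case True
    then show ?thesis unfolding mat_mult_def N sum_lessThan_Suc_Suc_shift by (simp add: theta_block_def)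
  next
    case False
    have "mat_mult N (theta_block N a) X i j = (\<Sum>k<N. if i < N \<and> k = i then X k j else 0)"
      unfolding mat_mult_def using False by (intro sum.cong refl) (auto simp: theta_block_def)
    then show ?thesis using False by (simp add: sum_delta_conj)
  qed
qed

lemma cmv_L_Suc:
  assumes m: "1 \<le> m"
  shows "cmv_L (Suc m) \<alpha> \<beta> = mat_mult (Suc m) (theta_block (Suc m) (\<alpha> 0)) (one_dsum (cmv_M m (\<lambda>j. \<alpha> (Suc j)) \<beta>))"
proof (intro ext)
  fix i j
  let ?X = "one_dsum (cmv_M m (\<lambda>j. \<alpha> (Suc j)) \<beta>)"
  have "cmv_L (Suc m) \<alpha> \<beta> i j = (if i < 2 then Theta (\<alpha> 0) i 0 * ?X 0 j + Theta (\<alpha> 0) i 1 * ?X 1 j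
      else if i < Suc m then ?X i j else 0)"
  proof (cases "i < 2")
    case True
    consider "j = 0" | "j = 1" | "j \<ge> 2" by arith
    then show ?thesis
    proof cases
      case 3
      then have "(i div 2 = j div 2) = False" using True by auto
      then show ?thesis using True m 3 by (auto simp: cmv_L_def one_dsum_def cmv_M_def)
    qed (use True m in \<open>auto simp: cmv_L_def one_dsum_def cmv_M_def\<close>)
  next
    case False
    then obtain i' where i: "i = Suc (Suc i')" by (metis add_2_eq_Suc le_Suc_ex not_less)
    have d: "i div 2 = Suc (i' div 2)" "i mod 2 = i' mod 2" using i by auto
    show ?thesis
    proof (cases "j < 2")
      case True
      then show ?thesis using False m i by (auto simp: cmv_L_def one_dsum_def cmv_M_def)
    next
      case False
      then obtain j' where j: "j = Suc (Suc j')" by (metis add_2_eq_Suc le_Suc_ex not_less)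
      have dj: "j div 2 = Suc (j' div 2)" "j mod 2 = j' mod 2" using j by auto
      have e: "(2 * (i' div 2) + 2 < m) = (2 * Suc (i' div 2) + 1 < Suc m)" by arith
      have e2: "(Suc j' = m - Suc 0) = (Suc (Suc j') = m)" "(Suc i' = m - Suc 0) = (Suc (Suc i') = m)"
        using m by arith+
      show ?thesis using m unfolding i j one_dsum_def cmv_M_def cmv_L_def
        by (simp add: d[unfolded i] dj[unfolded j] e e2)
    qed
  qed
  then show "cmv_L (Suc m) \<alpha> \<beta> i j = mat_mult (Suc m) (theta_block (Suc m) (\<alpha> 0)) ?X i j"
    using mat_mult_theta_block[of "Suc m"] m by simp
qed

text \<open>C(\<alpha>_0, ..., \<alpha>_{m-1}; \<beta>) = (\<Theta>(\<alpha>_0) \<oplus> 1) (1 \<oplus> C(\<alpha>_1, ..., \<alpha>_{m-1}; \<beta>)^T): the L factor of order m+1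
  is (\<Theta>(\<alpha>_0) \<oplus> 1)(1 \<oplus> M') and the M factor is 1 \<oplus> L', where L', M' are the factors of order m
  for the shifted parameters; as L', M' are symmetric, M' L' is the transpose of L' M'.\<close>

lemma cmv_Suc_factor:
  assumes m: "1 \<le> m"
  shows "cmv (Suc m) \<alpha> \<beta> = mat_mult (Suc m) (theta_block (Suc m) (\<alpha> 0)) (one_dsum (\<lambda>i j. cmv m (\<lambda>j. \<alpha> (Suc j)) \<beta> j i))"
proof -
  let ?L = "cmv_L m (\<lambda>j. \<alpha> (Suc j)) \<beta>" and ?M = "cmv_M m (\<lambda>j. \<alpha> (Suc j)) \<beta>"
  have "cmv (Suc m) \<alpha> \<beta> = mat_mult (Suc m) (mat_mult (Suc m) (theta_block (Suc m) (\<alpha> 0)) (one_dsum ?M)) (one_dsum ?L)"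
    by (simp add: cmv_eq_mat_mult cmv_L_Suc[OF m] cmv_M_Suc[OF m])
  also have "\<dots> = mat_mult (Suc m) (theta_block (Suc m) (\<alpha> 0)) (one_dsum (mat_mult m ?M ?L))"
    by (simp add: mat_mult_assoc mat_mult_one_dsum zero_outside_cmv_L zero_outside_cmv_M)
  also have "mat_mult m ?M ?L = (\<lambda>i j. cmv m (\<lambda>j. \<alpha> (Suc j)) \<beta> j i)"
    by (intro ext) (simp add: mat_mult_def cmv_def cmv_L_sym[of m _ _ _ ] cmv_M_sym[of m] mult.commute)
  finally show ?thesis .
qed

lemma rho_mult_cnj: "cmod a \<le> 1 \<Longrightarrow> rho a * cnj (rho a) = 1 - a * cnj a"
proof -
  assume a: "cmod a \<le> 1"
  have "0 \<le> 1 - (cmod a)^2" using a by (simp add: power_le_one)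
  then have "rho a * cnj (rho a) = of_real (1 - (cmod a)^2)"
    by (simp add: rho_def flip: of_real_mult)
  also have "\<dots> = 1 - a * cnj a" by (simp add: mult_cnj_self)
  finally show ?thesis .
qed

lemma cnj_rho: "cnj (rho a) = rho a" by (simp add: rho_def)
lemma rho_cnj: "rho (cnj a) = rho a" by (simp add: rho_def)

lemma Theta_rows_orthonormal:
  assumes "cmod a \<le> 1" "r < 2" "c < 2"
  shows "Theta a r 0 * cnj (Theta a c 0) + Theta a r 1 * cnj (Theta a c 1) = (if r = c then 1 else 0)"
proof -
  have rs: "rho a * rho a = 1 - a * cnj a" using rho_mult_cnj[OF assms(1)] by (simp add: cnj_rho)
  have "r = 0 \<or> r = 1" "c = 0 \<or> c = 1" using assms by auto
  then show ?thesis using rs by (auto simp: Theta_def cnj_rho algebra_simps)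
qed

lemma mat_adj_theta_block: "mat_adj (theta_block N a) = theta_block N (cnj a)"
  by (intro ext) (auto simp: mat_adj_def theta_block_def Theta_def cnj_rho rho_cnj)

lemma theta_block_mat_mult_adj:
  assumes N: "2 \<le> N" and a: "cmod a \<le> 1"
  shows "mat_mult N (theta_block N a) (mat_adj (theta_block N a)) = mat_id N"
proof (intro ext)
  fix i j
  show "mat_mult N (theta_block N a) (mat_adj (theta_block N a)) i j = mat_id N i j"
    unfolding mat_mult_theta_block[OF N]
  proof (cases "i < 2")
    case True
    show "(if i < 2 then Theta a i 0 * mat_adj (theta_block N a) 0 j + Theta a i 1 * mat_adj (theta_block N a) 1 j
          else if i < N then mat_adj (theta_block N a) i j else 0) = mat_id N i j"
    proof (cases "j < 2")
      case True
      then show ?thesis using \<open>i < 2\<close> Theta_rows_orthonormal[OF a, of i j] N by (simp add: mat_adj_def theta_block_def mat_id_def)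
    next
      case False
      then show ?thesis using \<open>i < 2\<close> by (auto simp: mat_adj_def theta_block_def mat_id_def)
    qed
  next
    case False
    then show "(if i < 2 then Theta a i 0 * mat_adj (theta_block N a) 0 j + Theta a i 1 * mat_adj (theta_block N a) 1 j
          else if i < N then mat_adj (theta_block N a) i j else 0) = mat_id N i j"
      by (auto simp: mat_adj_def theta_block_def mat_id_def)
  qed
qed

lemma unitary_theta_block:
  assumes N: "2 \<le> N" and a: "cmod a \<le> 1"
  shows "unitary_n N (theta_block N a)" "mat_mult N (theta_block N a) (mat_adj (theta_block N a)) = mat_id N" "mat_mult N (mat_adj (theta_block N a)) (theta_block N a) = mat_id N"
proof -
  show 1: "mat_mult N (theta_block N a) (mat_adj (theta_block N a)) = mat_id N" by (rule theta_block_mat_mult_adj[OF N a])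
  have "mat_mult N (theta_block N (cnj a)) (mat_adj (theta_block N (cnj a))) = mat_id N" by (rule theta_block_mat_mult_adj[OF N]) (use a in simp)
  then show 2: "mat_mult N (mat_adj (theta_block N a)) (theta_block N a) = mat_id N" by (simp add: mat_adj_theta_block)
  show "unitary_n N (theta_block N a)" unfolding unitary_n_iff_mat_mult using 1 2 by simp
qed

lemma zero_outside_theta_block: "zero_outside N (theta_block N a)" by (auto simp: zero_outside_def theta_block_def)

section \<open>A characterization of CMV matrices\<close>

definition pos_real :: "complex \<Rightarrow> bool" where
  "pos_real z \<longleftrightarrow> Im z = 0 \<and> Re z > 0"

lemma pos_realD: "pos_real z \<Longrightarrow> z = of_real (Re z) \<and> Re z > 0"
  unfolding pos_real_def by (simp add: complex_eq_iff)

definition cmv_zero_pattern :: "nat \<Rightarrow> (nat \<Rightarrow> nat \<Rightarrow> complex) \<Rightarrow> bool" where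
  "cmv_zero_pattern n C \<longleftrightarrow> (\<forall>i<n. \<forall>j<n. C i j \<noteq> 0 \<longrightarrow>
     (j \<le> i + 2 \<and> (odd j \<longrightarrow> j \<le> i + 1)) \<and> (i \<le> j + 2 \<and> (even i \<longrightarrow> i \<le> j + 1)))"

lemma cmv_zero_patternD:
  assumes "cmv_zero_pattern n C" "i < n" "j < n" "C i j \<noteq> 0"
  shows cmv_zero_pattern_upper: "j \<le> i + 2 \<and> (odd j \<longrightarrow> j \<le> i + 1)"
    and cmv_zero_pattern_lower: "i \<le> j + 2 \<and> (even i \<longrightarrow> i \<le> j + 1)"
  using assms unfolding cmv_zero_pattern_def by blast+

text \<open>In a CMV matrix the entries required to be positive here are products of \<rho>'s.\<close>

definition cmv_shaped :: "nat \<Rightarrow> (nat \<Rightarrow> nat \<Rightarrow> complex) \<Rightarrow> bool" where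
  "cmv_shaped n C \<longleftrightarrow> unitary_n n C \<and> zero_outside n C \<and> cmv_zero_pattern n C \<and>
     (\<forall>k. even k \<longrightarrow> k + 2 < n \<longrightarrow> pos_real (C k (k + 2))) \<and>
     (\<forall>k. odd k \<longrightarrow> k + 2 < n \<longrightarrow> pos_real (C (k + 2) k)) \<and>
     (2 \<le> n \<longrightarrow> pos_real (C 1 0))"

lemma cmv_shaped_1:
  assumes "cmv_shaped 1 C"
  shows "C = cmv 1 (\<lambda>_. 0) (cnj (C 0 0))" and "cmod (cnj (C 0 0)) = 1"
proof -
  have "C 0 0 * cnj (C 0 0) = 1" using assms unfolding cmv_shaped_def unitary_n_def by auto
  then show "cmod (cnj (C 0 0)) = 1" by (simp add: norm_eq_1_if_mult_cnj)
  have "zero_outside 1 C" using assms unfolding cmv_shaped_def by auto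
  then show "C = cmv 1 (\<lambda>_. 0) (cnj (C 0 0))"
    by (intro ext) (auto simp: cmv_def cmv_L_def cmv_M_def zero_outside_def)
qed

text \<open>Deflation of a CMV-shaped matrix of order m+1: with a = cnj C_{00}, the first column of C
  is (cnj a, \<rho>(a), 0, ..., 0), so \<Theta>(a)^* \<oplus> 1 maps it to e_0. The result is 1 \<oplus> C'^T with
  C' CMV-shaped of order m (the transpose swaps the roles of even and odd indices).\<close>

locale cmv_deflation =
  fixes m :: nat and C :: "nat \<Rightarrow> nat \<Rightarrow> complex"
  assumes m: "1 \<le> m" and shaped: "cmv_shaped (Suc m) C"
begin

definition alpha0 :: complex where "alpha0 = cnj (C 0 0)"

definition deflated :: "nat \<Rightarrow> nat \<Rightarrow> complex" where
  "deflated = mat_mult (Suc m) (mat_adj (theta_block (Suc m) alpha0)) C"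

definition minor :: "nat \<Rightarrow> nat \<Rightarrow> complex" where
  "minor i j = (if i < m \<and> j < m then deflated (Suc j) (Suc i) else 0)"

lemma two_le: "2 \<le> Suc m"
  using m by simp

lemma unitary_C: "unitary_n (Suc m) C"
  and zero_outside_C: "zero_outside (Suc m) C"
  and pattern_C: "cmv_zero_pattern (Suc m) C"
  and pos_even_C: "even k \<Longrightarrow> k + 2 < Suc m \<Longrightarrow> pos_real (C k (k + 2))"
  and pos_odd_C: "odd k \<Longrightarrow> k + 2 < Suc m \<Longrightarrow> pos_real (C (k + 2) k)"
  and pos_10_C: "pos_real (C 1 0)"
  using shaped two_le unfolding cmv_shaped_def by auto

lemma first_col_zero: "2 \<le> k \<Longrightarrow> C k 0 = 0"
  using cmv_zero_pattern_lower[OF pattern_C, of k 0] zero_outside_C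
  by (cases "k < Suc m"; cases "k = 2") (auto simp: zero_outside_def)

definition r :: real where "r = Re (C 1 0)"

lemma C_10: "C 1 0 = of_real r" and r_pos: "r > 0"
  using pos_realD[OF pos_10_C] by (auto simp: r_def)

lemma first_col_norm: "cnj (C 0 0) * C 0 0 + of_real (r^2) = 1"
proof -
  obtain m' where m': "Suc m = Suc (Suc m')" using m by (cases m) auto
  have "(\<Sum>k<Suc m. cnj (C k 0) * C k 0) = 1" using unitary_C unfolding unitary_n_def by auto
  then show ?thesis
    unfolding m' sum_lessThan_Suc_Suc_shift using first_col_zero C_10 by (simp add: power2_eq_square)
qed

lemma norm_alpha0_sq: "(cmod alpha0)^2 = 1 - r^2"
proof -
  have "complex_of_real ((cmod alpha0)^2) = complex_of_real (1 - r^2)"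
    using first_col_norm by (simp add: alpha0_def mult_cnj_self mult.commute eq_diff_eq)
  then show ?thesis using of_real_eq_iff by blast
qed

lemma norm_alpha0: "cmod alpha0 < 1"
proof -
  have "(cmod alpha0)^2 < 1" using norm_alpha0_sq r_pos by simp
  then show ?thesis by (simp add: power_less_one_iff abs_square_less_1)
qed

lemma rho_alpha0: "rho alpha0 = of_real r"
  unfolding rho_def using norm_alpha0_sq r_pos by simp

lemma deflated_entry:
  "deflated i j = (if i = 0 then alpha0 * C 0 j + of_real r * C 1 j
     else if i = 1 then of_real r * C 0 j - cnj alpha0 * C 1 j else if i < Suc m then C i j else 0)"
  unfolding deflated_def mat_adj_theta_block mat_mult_theta_block[OF two_le]
  using rho_alpha0 by (auto simp: Theta_def rho_cnj)

lemma deflated_tail: "2 \<le> i \<Longrightarrow> deflated i j = C i j"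
  using zero_outside_C by (auto simp: deflated_entry zero_outside_def)

lemma zero_outside_deflated: "zero_outside (Suc m) deflated"
  unfolding deflated_def
  by (intro zero_outside_mat_mult zero_outside_mat_adj zero_outside_theta_block zero_outside_C)

lemma unitary_deflated: "unitary_n (Suc m) deflated"
proof -
  have "unitary_n (Suc m) (mat_adj (theta_block (Suc m) alpha0))"
    using unitary_theta_block[OF two_le, of "cnj alpha0"] norm_alpha0 by (simp add: mat_adj_theta_block)
  then show ?thesis unfolding deflated_def
    by (rule unitary_n_mat_mult)
      (use zero_outside_theta_block zero_outside_C unitary_C in \<open>auto intro: zero_outside_mat_adj\<close>)
qed

lemma deflated_00: "deflated 0 0 = 1"
  using first_col_norm C_10 by (simp add: deflated_entry alpha0_def power2_eq_square)

lemma deflated_first_col: "0 < k \<Longrightarrow> deflated k 0 = 0"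
  using C_10 first_col_zero by (cases "k = 1") (auto simp: deflated_entry alpha0_def)

lemma deflated_first_row: "0 < j \<Longrightarrow> deflated 0 j = 0"
proof (cases "j < Suc m")
  case True
  assume "0 < j"
  have sum: "(\<Sum>k<Suc m. deflated 0 k * cnj (deflated 0 k)) = 1"
    using unitary_deflated unfolding unitary_n_def by auto
  show ?thesis
    using unit_sum_others_zero[where m = 0, OF sum _ _ True] deflated_00 \<open>0 < j\<close> by simp
qed (use zero_outside_deflated in \<open>auto simp: zero_outside_def\<close>)

lemma one_dsum_minor: "one_dsum (\<lambda>i j. minor j i) = deflated"
proof (intro ext)
  fix i j show "one_dsum (\<lambda>i j. minor j i) i j = deflated i j"
    using deflated_00 deflated_first_col deflated_first_row zero_outside_deflated
    by (cases "i = 0 \<or> j = 0") (auto simp: one_dsum_def minor_def zero_outside_def)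
qed

lemma theta_mult_deflated: "mat_mult (Suc m) (theta_block (Suc m) alpha0) deflated = C"
  using unitary_theta_block[OF two_le less_imp_le[OF norm_alpha0]] zero_outside_C
  unfolding deflated_def by (simp add: mat_mult_assoc[symmetric] mat_mult_id_left)

lemma unitary_minor: "unitary_n m minor"
proof -
  have u1: "(\<Sum>k<m. minor i k * cnj (minor j k)) = (if i = j then 1 else 0)" if "i < m" "j < m" for i j
  proof -
    have "(\<Sum>k<Suc m. cnj (deflated k (Suc j)) * deflated k (Suc i)) = (if Suc j = Suc i then 1 else 0)"
      using unitary_deflated that unfolding unitary_n_def by auto
    then have "(\<Sum>k<m. cnj (deflated (Suc k) (Suc j)) * deflated (Suc k) (Suc i)) = (if i = j then 1 else 0)"
      using deflated_first_row by (auto simp: sum.lessThan_Suc_shift simp del: sum.lessThan_Suc)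
    then show ?thesis using that by (simp add: minor_def mult.commute)
  qed
  have u2: "(\<Sum>k<m. cnj (minor k i) * minor k j) = (if i = j then 1 else 0)" if "i < m" "j < m" for i j
  proof -
    have "(\<Sum>k<Suc m. deflated (Suc j) k * cnj (deflated (Suc i) k)) = (if Suc j = Suc i then 1 else 0)"
      using unitary_deflated that unfolding unitary_n_def by auto
    then have "(\<Sum>k<m. deflated (Suc j) (Suc k) * cnj (deflated (Suc i) (Suc k))) = (if i = j then 1 else 0)"
      using deflated_first_col by (auto simp: sum.lessThan_Suc_shift simp del: sum.lessThan_Suc)
    then show ?thesis using that by (simp add: minor_def mult.commute)
  qed
  show ?thesis unfolding unitary_n_def using u1 u2 by blast
qed

lemma pattern_minor: "cmv_zero_pattern m minor"
  unfolding cmv_zero_pattern_def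
proof (intro allI impI)
  fix i j assume a: "i < m" "j < m" "minor i j \<noteq> 0"
  show "(j \<le> i + 2 \<and> (odd j \<longrightarrow> j \<le> i + 1)) \<and> (i \<le> j + 2 \<and> (even i \<longrightarrow> i \<le> j + 1))"
  proof (cases "j = 0")
    case False
    then have "C (Suc j) (Suc i) \<noteq> 0" using a deflated_tail[of "Suc j" "Suc i"] by (simp add: minor_def)
    then show ?thesis
      using cmv_zero_patternD[OF pattern_C, of "Suc j" "Suc i"] a by simp
  next
    case True
    then have "deflated 1 (Suc i) \<noteq> 0" using a by (simp add: minor_def)
    then have "C 0 (Suc i) \<noteq> 0 \<or> C 1 (Suc i) \<noteq> 0" by (auto simp: deflated_entry)
    then have "Suc i \<le> 3 \<and> (odd (Suc i) \<longrightarrow> Suc i \<le> 2)"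
      using cmv_zero_pattern_upper[OF pattern_C, of 0 "Suc i"]
        cmv_zero_pattern_upper[OF pattern_C, of 1 "Suc i"] a two_le by auto
    then show ?thesis using True by presburger
  qed
qed

lemma pos_even_minor: "even k \<Longrightarrow> k + 2 < m \<Longrightarrow> pos_real (minor k (k + 2))"
  using pos_odd_C[of "k + 1"] deflated_tail[of "Suc (Suc (Suc k))" "Suc k"]
  by (simp add: minor_def)

lemma pos_odd_minor: "odd k \<Longrightarrow> k + 2 < m \<Longrightarrow> pos_real (minor (k + 2) k)"
  using pos_even_C[of "k + 1"] deflated_tail[of "Suc k" "Suc (Suc (Suc k))"] odd_pos[of k]
  by (simp add: minor_def)

text \<open>Unlike the other positive entries of the minor, C'_{10} = (\<Theta>(a)^* C)_{12} mixes two rows of C;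
  it equals C_{02} / \<rho>(a) because the entry (\<Theta>(a)^* C)_{02} vanishes.\<close>

lemma pos_10_minor:
  assumes m2: "2 \<le> m"
  shows "pos_real (minor 1 0)"
proof -
  have "pos_real (C 0 2)" using pos_even_C[of 0] m2 by (simp add: numeral_2_eq_2)
  then obtain s where s: "C 0 2 = of_real s" "s > 0" using pos_realD by blast
  have row0: "alpha0 * C 0 2 + of_real r * C 1 2 = 0"
    using deflated_first_row[of 2] by (simp add: deflated_entry)
  have "deflated 1 2 * of_real r = of_real r * of_real r * C 0 2 - cnj alpha0 * (of_real r * C 1 2)"
    by (simp add: deflated_entry algebra_simps)
  also have "of_real r * C 1 2 = - alpha0 * C 0 2"
    using row0 by (simp add: algebra_simps eq_neg_iff_add_eq_0)
  also have "of_real r * of_real r * C 0 2 - cnj alpha0 * (- alpha0 * C 0 2)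
      = (of_real (r^2) + alpha0 * cnj alpha0) * C 0 2"
    by (simp add: algebra_simps power2_eq_square)
  also have "of_real (r^2) + alpha0 * cnj alpha0 = 1"
  proof -
    have "alpha0 * cnj alpha0 = of_real ((cmod alpha0)^2)" by (rule complex_norm_square[symmetric])
    then show ?thesis using norm_alpha0_sq by simp
  qed
  finally have "deflated 1 2 = of_real (s / r)" using s r_pos by (simp add: field_simps)
  moreover have "minor 1 0 = deflated 1 2" using m2 by (simp add: minor_def numeral_2_eq_2)
  ultimately show ?thesis using s r_pos by (simp add: pos_real_def)
qed

lemma cmv_shaped_minor: "cmv_shaped m minor"
  unfolding cmv_shaped_def
  using unitary_minor pattern_minor pos_even_minor pos_odd_minor pos_10_minor
  by (auto simp: zero_outside_def minor_def)

lemma cmv_of_minor: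
  assumes "minor = cmv m (\<lambda>j. \<alpha> (Suc j)) \<beta>" and "\<alpha> 0 = alpha0"
  shows "C = cmv (Suc m) \<alpha> \<beta>"
  using cmv_Suc_factor[OF m, of \<alpha> \<beta>] assms one_dsum_minor theta_mult_deflated by simp

end

lemma cmv_shaped_is_cmv:
  "1 \<le> n \<Longrightarrow> cmv_shaped n C \<Longrightarrow> \<exists>\<alpha> \<beta>. (\<forall>j<n - 1. cmod (\<alpha> j) < 1) \<and> cmod \<beta> = 1 \<and> C = cmv n \<alpha> \<beta>"
proof (induction n arbitrary: C rule: nat_induct_at_least)
  case base
  then show ?case using cmv_shaped_1 by (intro exI[of _ "\<lambda>_. 0"] exI[of _ "cnj (C 0 0)"]) simp
next
  case (Suc m)
  interpret cmv_deflation m C by unfold_locales (use Suc in auto)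
  obtain \<alpha>' \<beta> where \<alpha>': "\<forall>j<m - 1. cmod (\<alpha>' j) < 1" and \<beta>: "cmod \<beta> = 1"
    and minor: "minor = cmv m \<alpha>' \<beta>"
    using Suc.IH[OF cmv_shaped_minor] by blast
  define \<alpha> where "\<alpha> j = (if j = 0 then alpha0 else \<alpha>' (j - 1))" for j
  have "C = cmv (Suc m) \<alpha> \<beta>"
    by (rule cmv_of_minor) (simp_all add: minor \<alpha>_def)
  moreover have "\<forall>j<Suc m - 1. cmod (\<alpha> j) < 1"
    using \<alpha>' norm_alpha0 by (auto simp: \<alpha>_def)
  ultimately show ?case using \<beta> by blast
qed

section \<open>Existence\<close>

lemma mult_matrix_rephase:
  "mult_matrix n \<xi> (\<lambda>i t. cnj (d i) * q i t) i j = d i * mult_matrix n \<xi> q i j * cnj (d j)"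
proof -
  have "diag_mult \<xi> (\<lambda>t. cnj (d j) * q j t) = (\<lambda>t. cnj (d j) * diag_mult \<xi> (q j) t)"
    by (simp add: diag_mult_def mult_ac)
  then show ?thesis
    unfolding mult_matrix_def by (simp add: inner_n_scale_left inner_n_scale_right mult_ac)
qed

lemma orthonormal_rephase:
  assumes "orthonormal_n n q" and "\<forall>i<n. d i * cnj (d i) = 1"
  shows "orthonormal_n n (\<lambda>i t. cnj (d i) * q i t)"
  using assms unfolding orthonormal_n_def
  by (auto simp: inner_n_scale_left inner_n_scale_right mult.commute)

text \<open>If C_{10} = 0 and C_{k0} = 0 for k \<ge> 2, the first column of the unitary C is a unimodular
  multiple of e_0, and then so is its first row.\<close>

lemma unitary_entry_10_nonzero:
  assumes u: "unitary_n n C" and col0: "\<forall>k. 2 \<le> k \<longrightarrow> k < n \<longrightarrow> C k 0 = 0"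
    and j: "1 \<le> j" "j < n" "C 0 j \<noteq> 0"
  shows "C 1 0 \<noteq> 0"
proof
  assume c: "C 1 0 = 0"
  have "(\<Sum>k<n. cnj (C k 0) * C k 0) = (\<Sum>k<n. if k = 0 then cnj (C 0 0) * C 0 0 else 0)"
  proof (intro sum.cong refl)
    fix k assume "k \<in> {..<n}"
    then show "cnj (C k 0) * C k 0 = (if k = 0 then cnj (C 0 0) * C 0 0 else 0)"
      using c col0 by (cases "k < 2") (auto simp: less_2_cases_iff)
  qed
  moreover have "(\<Sum>k<n. cnj (C k 0) * C k 0) = 1" using u j unfolding unitary_n_def by auto
  ultimately have col: "C 0 0 * cnj (C 0 0) = 1" using j by (simp add: mult.commute)
  have row: "(\<Sum>k<n. C 0 k * cnj (C 0 k)) = 1" using u j unfolding unitary_n_def by auto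
  have "C 0 j = 0" by (rule unit_sum_others_zero[OF row col]) (use j in auto)
  then show False using j by simp
qed

context cmv_basis
begin

lemma twist_chi_in_tail: "m < j \<Longrightarrow> j < n \<Longrightarrow> in_tail_span m (diag_mult (twist m) (chi j))"
  using twist_maps_tail_into in_tail_span_chi[OF orthonormal_tail_all] by simp

lemma in_tail_span_orth_below: "in_tail_span m y \<Longrightarrow> i < m \<Longrightarrow> i < n \<Longrightarrow> inner_n n y (chi i) = 0"
  by (rule in_tail_span_orth) (use orthonormal_tail_all[of 0] in \<open>auto simp: orthonormal_tail_def\<close>)

abbreviation chi_matrix :: "nat \<Rightarrow> nat \<Rightarrow> complex" where
  "chi_matrix \<equiv> mult_matrix n \<xi> chi"

lemma chi_matrix_cnj:
  "i < n \<Longrightarrow> j < n \<Longrightarrow> chi_matrix i j = cnj (inner_n n (diag_mult (\<lambda>t. cnj (\<xi> t)) (chi i)) (chi j))"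
  by (simp add: mult_matrix_def inner_n_diag_mult_adjoint inner_n_commute[of n "chi j"])

text \<open>Column j of the matrix involves \<xi> \<chi>_j, which lies in the span from j - 1 (j odd) or
  j - 2 (j even) on; row i involves cnj \<xi> \<chi>_i, in the span from i - 1 (i even) or i - 2 (i odd) on.\<close>

lemma chi_matrix_zero_pattern: "cmv_zero_pattern n chi_matrix"
  unfolding cmv_zero_pattern_def
proof (intro allI impI)
  fix i j assume ij: "i < n" "j < n" and nz: "chi_matrix i j \<noteq> 0"
  have "j \<le> i + 2 \<and> (odd j \<longrightarrow> j \<le> i + 1)"
  proof (rule ccontr)
    assume a: "\<not> ?thesis"
    define m where "m = (if odd j then j - 1 else j - 2)"
    have "even m" "m < j" "i < m" using a unfolding m_def by presburger+
    then have "inner_n n (diag_mult \<xi> (chi j)) (chi i) = 0"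
      using in_tail_span_orth_below[OF twist_chi_in_tail[of m j]] ij by (simp add: twist_def)
    then show False using nz ij by (simp add: mult_matrix_def)
  qed
  moreover have "i \<le> j + 2 \<and> (even i \<longrightarrow> i \<le> j + 1)"
  proof (rule ccontr)
    assume a: "\<not> ?thesis"
    define m where "m = (if even i then i - 1 else i - 2)"
    have "odd m" "m < i" "j < m" using a unfolding m_def by presburger+
    then have "inner_n n (diag_mult (\<lambda>t. cnj (\<xi> t)) (chi i)) (chi j) = 0"
      using in_tail_span_orth_below[OF twist_chi_in_tail[of m i]] ij by (simp add: twist_def)
    then show False using nz ij chi_matrix_cnj by simp
  qed
  ultimately show "(j \<le> i + 2 \<and> (odd j \<longrightarrow> j \<le> i + 1)) \<and> i \<le> j + 2 \<and> (even i \<longrightarrow> i \<le> j + 1)"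
    by blast
qed

lemma chi_matrix_even_superdiag:
  assumes "even k" "k + 2 < n"
  shows "chi_matrix k (k + 2) = of_real (residual_norm k)"
proof -
  have "source_index k = k + 2" using assms by (simp add: source_index_def)
  then have "shifted k = diag_mult \<xi> (chi (k + 2))"
    using assms by (simp add: shifted_def twist_def)
  then show ?thesis using inner_shifted_chi[of k] assms by (simp add: mult_matrix_def)
qed

lemma chi_matrix_odd_subdiag:
  assumes "odd k" "k + 2 < n"
  shows "chi_matrix (k + 2) k = of_real (residual_norm k)"
proof -
  have "source_index k = k + 2" using assms by (simp add: source_index_def)
  then have "shifted k = diag_mult (\<lambda>t. cnj (\<xi> t)) (chi (k + 2))"
    using assms by (simp add: shifted_def twist_def)
  then show ?thesis using inner_shifted_chi[of k] assms chi_matrix_cnj[of "k + 2" k] by simp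
qed

lemma chi_matrix_10_nonzero:
  assumes n2: "2 \<le> n"
  shows "chi_matrix 1 0 \<noteq> 0"
proof (rule unitary_entry_10_nonzero)
  show "unitary_n n chi_matrix" by (rule unitary_mult_matrix[OF orthonormal_chi xi1])
  show "\<forall>k. 2 \<le> k \<longrightarrow> k < n \<longrightarrow> chi_matrix k 0 = 0"
  proof (intro allI impI)
    fix k assume k: "2 \<le> k" "k < n"
    show "chi_matrix k 0 = 0"
    proof (rule ccontr)
      assume "chi_matrix k 0 \<noteq> 0"
      then have "k \<le> 0 + 2 \<and> (even k \<longrightarrow> k \<le> 0 + 1)"
        using cmv_zero_pattern_lower[OF chi_matrix_zero_pattern] k n2 by simp
      then show False using k by presburger
    qed
  qed
  show "1 \<le> source_index 0" and s: "source_index 0 < n" using n2 by (auto simp: source_index_def)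
  have "shifted 0 = diag_mult \<xi> (chi (source_index 0))" by (simp add: shifted_def twist_def)
  then show "chi_matrix 0 (source_index 0) \<noteq> 0"
    using inner_shifted_chi[of 0] residual_norm_pos[of 0] n2 s by (simp add: mult_matrix_def)
qed

text \<open>Only the sign of C_{10} remains to be fixed: multiplying the odd-indexed basis vectors by
  a common unimodular constant leaves the entries C_{k,k+2}, C_{k+2,k} unchanged.\<close>

definition phase :: "nat \<Rightarrow> complex" where
  "phase i = (if even i then 1 else cnj (chi_matrix 1 0) / of_real (cmod (chi_matrix 1 0)))"

definition rephased_chi :: "nat \<Rightarrow> nat \<Rightarrow> complex" where
  "rephased_chi i t = cnj (phase i) * chi i t"

lemma phase_Suc_Suc: "phase (Suc (Suc k)) = phase k"
  by (simp add: phase_def)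

lemma phase_unimodular: "i < n \<Longrightarrow> phase i * cnj (phase i) = 1"
proof (cases "even i")
  case False
  assume "i < n"
  then have "chi_matrix 1 0 \<noteq> 0" using False chi_matrix_10_nonzero odd_pos[OF False] by simp
  then show ?thesis using False
    by (simp add: phase_def mult_cnj_self field_simps power2_eq_square flip: of_real_mult)
qed (simp add: phase_def)

lemma cmv_shaped_rephased: "cmv_shaped n (mult_matrix n \<xi> rephased_chi)"
proof -
  have entry: "mult_matrix n \<xi> rephased_chi i j = phase i * chi_matrix i j * cnj (phase j)" for i j
    unfolding rephased_chi_def[abs_def] by (rule mult_matrix_rephase)
  have "cmv_zero_pattern n (mult_matrix n \<xi> rephased_chi)"
    using chi_matrix_zero_pattern by (auto simp: cmv_zero_pattern_def entry)
  moreover have "pos_real (mult_matrix n \<xi> rephased_chi k (k + 2))" if "even k" "k + 2 < n" for k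
    using chi_matrix_even_superdiag[OF that] phase_unimodular[of k] residual_norm_pos[of k] that
    by (simp add: entry phase_Suc_Suc mult.commute[of _ "cnj (phase k)"] mult.assoc[symmetric] pos_real_def)
  moreover have "pos_real (mult_matrix n \<xi> rephased_chi (k + 2) k)" if "odd k" "k + 2 < n" for k
    using chi_matrix_odd_subdiag[OF that] phase_unimodular[of k] residual_norm_pos[of k] that
    by (simp add: entry phase_Suc_Suc mult.commute[of _ "cnj (phase k)"] mult.assoc[symmetric] pos_real_def)
  moreover have "pos_real (mult_matrix n \<xi> rephased_chi 1 0)" if "2 \<le> n"
  proof -
    have "chi_matrix 1 0 \<noteq> 0" by (rule chi_matrix_10_nonzero[OF that])
    moreover have "mult_matrix n \<xi> rephased_chi 1 0 = cnj (chi_matrix 1 0) * chi_matrix 1 0 / of_real (cmod (chi_matrix 1 0))"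
      by (simp add: entry phase_def)
    ultimately show ?thesis
      by (simp add: pos_real_def complex_norm_square[symmetric] mult.commute power2_eq_square)
  qed
  moreover have "unitary_n n (mult_matrix n \<xi> rephased_chi)"
    unfolding rephased_chi_def[abs_def]
    by (intro unitary_mult_matrix orthonormal_rephase orthonormal_chi xi1) (simp add: phase_unimodular)
  ultimately show ?thesis
    unfolding cmv_shaped_def by (auto simp: zero_outside_def mult_matrix_def)
qed

lemma spectral_measure_rephased:
  "spectral_measure n (mult_matrix n \<xi> rephased_chi) (e_last n) (\<lambda>z. \<Sum>l\<in>{l. l < n \<and> \<xi> l = z}. (cmod (v l))^2)"
proof -
  have "orthonormal_n n rephased_chi"
    unfolding rephased_chi_def[abs_def]
    by (intro orthonormal_rephase orthonormal_chi) (simp add: phase_unimodular)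
  then have "spectral_measure n (mult_matrix n \<xi> rephased_chi) (e_last n)
      (\<lambda>z. \<Sum>l\<in>{l. l < n \<and> \<xi> l = z}. (cmod (rephased_chi (n - 1) l))^2)"
    by (rule spectral_measure_mult_matrix[OF _ n1])
  moreover have "cmod (rephased_chi (n - 1) l) = cmod (v l)" for l
    using chi_last[of "n - 1"] n1 norm_eq_1_if_mult_cnj[OF phase_unimodular[of "n - 1"]]
    by (simp add: rephased_chi_def norm_mult)
  ultimately show ?thesis by simp
qed

end

lemma exists_cmv_with_spectral_measure:
  assumes n1: "n \<ge> 1" and xi1: "\<forall>j<n. cmod (\<xi> j) = 1" and inj: "inj_on \<xi> {..<n}"
    and pos: "\<forall>j<n. \<nu> j > 0" and total: "(\<Sum>j<n. \<nu> j) = 1"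
  shows "\<exists>\<alpha> \<beta>. (\<forall>j<n - 1. cmod (\<alpha> j) < 1) \<and> cmod \<beta> = 1
           \<and> spectral_measure n (cmv n \<alpha> \<beta>) (e_last n) (\<lambda>z. \<Sum>j\<in>{j. j < n \<and> \<xi> j = z}. \<nu> j)"
proof -
  define v where "v k = complex_of_real (sqrt (\<nu> k))" for k
  have sq: "(cmod (v k))^2 = \<nu> k" if "k < n" for k
    using pos that by (simp add: v_def less_imp_le)
  interpret cmv_basis n \<xi> v
  proof
    show "\<forall>k<n. v k \<noteq> 0" using pos by (simp add: v_def order_less_imp_not_eq2)
    show "sqnorm_n n v = 1" unfolding sqnorm_n_def using sq total by simp
  qed (use assms in auto)
  have "(\<lambda>z. \<Sum>l\<in>{l. l < n \<and> \<xi> l = z}. (cmod (v l))^2) = (\<lambda>z. \<Sum>j\<in>{j. j < n \<and> \<xi> j = z}. \<nu> j)"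
    using sq by (intro ext sum.cong) auto
  moreover obtain \<alpha> \<beta> where "\<forall>j<n - 1. cmod (\<alpha> j) < 1" "cmod \<beta> = 1"
    and "mult_matrix n \<xi> rephased_chi = cmv n \<alpha> \<beta>"
    using cmv_shaped_is_cmv[OF n1 cmv_shaped_rephased] by blast
  ultimately show ?thesis
    using spectral_measure_rephased by (intro exI[of _ \<alpha>] exI[of _ \<beta>]) simp
qed

section \<open>Entries of CMV matrices\<close>

lemma div2_eq_iff:
  "(a::nat) div 2 = b div 2 \<longleftrightarrow> a = b \<or> (even a \<and> b = a + 1) \<or> (even b \<and> a = b + 1)"
  by presburger

text \<open>Entry (i, j) of C = L M is a sum over l of L_{il} M_{lj}; a term can only be nonzero if
  i, l lie in the same 2 x 2 block of L and l, j in the same block of M.\<close>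

definition cmv_index_link :: "nat \<Rightarrow> nat \<Rightarrow> nat \<Rightarrow> bool" where
  "cmv_index_link i l j \<longleftrightarrow> i div 2 = l div 2 \<and>
     ((l = 0 \<and> j = 0) \<or> (1 \<le> l \<and> 1 \<le> j \<and> (l - 1) div 2 = (j - 1) div 2))"

lemma cmv_L_M_nonzero_link:
  "cmv_L n \<alpha> \<beta> i l \<noteq> 0 \<Longrightarrow> cmv_M n \<alpha> \<beta> l j \<noteq> 0 \<Longrightarrow> cmv_index_link i l j"
proof -
  assume L: "cmv_L n \<alpha> \<beta> i l \<noteq> 0" and M: "cmv_M n \<alpha> \<beta> l j \<noteq> 0"
  have "i div 2 = l div 2"
    using L unfolding cmv_L_def by (auto split: if_splits)
  moreover have "(l = 0 \<and> j = 0) \<or> (1 \<le> l \<and> 1 \<le> j \<and> (l - 1) div 2 = (j - 1) div 2)"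
    using M unfolding cmv_M_def by (auto split: if_splits)
  ultimately show ?thesis unfolding cmv_index_link_def by blast
qed

lemma cmv_nonzero_link:
  assumes "cmv n \<alpha> \<beta> i j \<noteq> 0"
  obtains l where "l < n" "cmv_index_link i l j"
proof -
  obtain l where "l \<in> {..<n}" "cmv_L n \<alpha> \<beta> i l * cmv_M n \<alpha> \<beta> l j \<noteq> 0"
    using assms unfolding cmv_def by (rule sum.not_neutral_contains_not_neutral)
  then have "l < n" "cmv_index_link i l j" using cmv_L_M_nonzero_link by auto
  then show ?thesis by (rule that)
qed

lemma cmv_zero_pattern_cmv: "cmv_zero_pattern n (cmv n \<alpha> \<beta>)"
  unfolding cmv_zero_pattern_def
proof (intro allI impI)
  fix i j assume "cmv n \<alpha> \<beta> i j \<noteq> 0"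
  then obtain l where "cmv_index_link i l j" by (rule cmv_nonzero_link)
  then show "(j \<le> i + 2 \<and> (odd j \<longrightarrow> j \<le> i + 1)) \<and> i \<le> j + 2 \<and> (even i \<longrightarrow> i \<le> j + 1)"
    unfolding cmv_index_link_def div2_eq_iff by (auto; presburger)
qed

lemma cmv_single_term:
  assumes "l0 < n" and "\<And>l. l < n \<Longrightarrow> cmv_index_link i l j \<Longrightarrow> l = l0"
  shows "cmv n \<alpha> \<beta> i j = cmv_L n \<alpha> \<beta> i l0 * cmv_M n \<alpha> \<beta> l0 j"
proof -
  have "cmv_L n \<alpha> \<beta> i l * cmv_M n \<alpha> \<beta> l j = 0" if "l < n" "l \<noteq> l0" for l
    using assms(2)[OF that(1)] that(2) cmv_L_M_nonzero_link[of n \<alpha> \<beta> i l j] by auto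
  then have "cmv n \<alpha> \<beta> i j = (\<Sum>l<n. if l = l0 then cmv_L n \<alpha> \<beta> i l * cmv_M n \<alpha> \<beta> l j else 0)"
    unfolding cmv_def by (intro sum.cong refl) auto
  then show ?thesis using assms(1) by simp
qed

lemma cmv_even_superdiag:
  assumes "even k" "k + 2 < n"
  shows "cmv n \<alpha> \<beta> k (k + 2) = rho (\<alpha> k) * rho (\<alpha> (k + 1))"
proof -
  have "cmv n \<alpha> \<beta> k (k + 2) = cmv_L n \<alpha> \<beta> k (k + 1) * cmv_M n \<alpha> \<beta> (k + 1) (k + 2)"
  proof (rule cmv_single_term)
    fix l assume "cmv_index_link k l (k + 2)"
    then show "l = k + 1" using assms unfolding cmv_index_link_def div2_eq_iff by (auto; presburger)
  qed (use assms in simp)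
  moreover have "cmv_L n \<alpha> \<beta> k (k + 1) = rho (\<alpha> k)"
    using assms by (auto simp: cmv_L_def Theta_def)
  moreover have "cmv_M n \<alpha> \<beta> (k + 1) (k + 2) = rho (\<alpha> (k + 1))"
    using assms by (auto simp: cmv_M_def Theta_def)
  ultimately show ?thesis by simp
qed

lemma cmv_odd_subdiag:
  assumes "odd k" "k + 2 < n"
  shows "cmv n \<alpha> \<beta> (k + 2) k = rho (\<alpha> (k + 1)) * rho (\<alpha> k)"
proof -
  have "cmv n \<alpha> \<beta> (k + 2) k = cmv_L n \<alpha> \<beta> (k + 2) (k + 1) * cmv_M n \<alpha> \<beta> (k + 1) k"
  proof (rule cmv_single_term)
    fix l assume "cmv_index_link (k + 2) l k"
    then show "l = k + 1" using assms unfolding cmv_index_link_def div2_eq_iff by (auto; presburger)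
  qed (use assms in simp)
  moreover have "cmv_L n \<alpha> \<beta> (k + 2) (k + 1) = rho (\<alpha> (k + 1))"
  proof -
    have "(k + 2) div 2 = (k + 1) div 2" "2 * ((k + 2) div 2) = k + 1" "(k + 2) mod 2 = 1" "(k + 1) mod 2 = 0"
      using assms by presburger+
    then show ?thesis using assms by (auto simp: cmv_L_def Theta_def)
  qed
  moreover have "cmv_M n \<alpha> \<beta> (k + 1) k = rho (\<alpha> k)"
  proof -
    have "k div 2 = (k - 1) div 2" "2 * (k div 2) + 1 = k" "k mod 2 = 1" "(k - 1) mod 2 = 0" "1 \<le> k"
      using assms by presburger+
    then show ?thesis using assms by (auto simp: cmv_M_def Theta_def)
  qed
  ultimately show ?thesis by simp
qed

lemma cmv_entry_10:
  assumes "2 \<le> n"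
  shows "cmv n \<alpha> \<beta> 1 0 = rho (\<alpha> 0)"
proof -
  have "cmv n \<alpha> \<beta> 1 0 = cmv_L n \<alpha> \<beta> 1 0 * cmv_M n \<alpha> \<beta> 0 0"
    by (rule cmv_single_term) (use assms in \<open>auto simp: cmv_index_link_def div2_eq_iff\<close>)
  then show ?thesis using assms by (simp add: cmv_L_def cmv_M_def Theta_def)
qed

lemma cmv_last_even:
  assumes "even n" "2 \<le> n"
  shows "cmv n \<alpha> \<beta> (n - 2) (n - 1) = rho (\<alpha> (n - 2)) * cnj \<beta>"
proof -
  have "cmv n \<alpha> \<beta> (n - 2) (n - 1) = cmv_L n \<alpha> \<beta> (n - 2) (n - 1) * cmv_M n \<alpha> \<beta> (n - 1) (n - 1)"
  proof (rule cmv_single_term)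
    fix l assume "cmv_index_link (n - 2) l (n - 1)"
    then show "l = n - 1" using assms unfolding cmv_index_link_def div2_eq_iff by (auto; presburger)
  qed (use assms in simp)
  moreover have "cmv_L n \<alpha> \<beta> (n - 2) (n - 1) = rho (\<alpha> (n - 2))"
  proof -
    have "(n - 2) div 2 = (n - 1) div 2" "2 * ((n - 2) div 2) = n - 2" "(n - 2) mod 2 = 0" "(n - 1) mod 2 = 1"
      using assms by presburger+
    then show ?thesis using assms by (auto simp: cmv_L_def Theta_def)
  qed
  moreover have "cmv_M n \<alpha> \<beta> (n - 1) (n - 1) = cnj \<beta>"
  proof -
    have "\<not> 2 * ((n - 1 - 1) div 2) + 2 < n" using assms by presburger
    then show ?thesis using assms by (auto simp: cmv_M_def)
  qed
  ultimately show ?thesis by simp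
qed

lemma cmv_last_odd:
  assumes "odd n" "3 \<le> n"
  shows "cmv n \<alpha> \<beta> (n - 1) (n - 2) = cnj \<beta> * rho (\<alpha> (n - 2))"
proof -
  have "cmv n \<alpha> \<beta> (n - 1) (n - 2) = cmv_L n \<alpha> \<beta> (n - 1) (n - 1) * cmv_M n \<alpha> \<beta> (n - 1) (n - 2)"
  proof (rule cmv_single_term)
    fix l assume "cmv_index_link (n - 1) l (n - 2)"
    then show "l = n - 1" using assms unfolding cmv_index_link_def div2_eq_iff by (auto; presburger)
  qed (use assms in simp)
  moreover have "cmv_L n \<alpha> \<beta> (n - 1) (n - 1) = cnj \<beta>"
  proof -
    have "\<not> 2 * ((n - 1) div 2) + 1 < n" using assms by presburger
    then show ?thesis using assms by (auto simp: cmv_L_def)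
  qed
  moreover have "cmv_M n \<alpha> \<beta> (n - 1) (n - 2) = rho (\<alpha> (n - 2))"
  proof -
    have "(n - 1 - 1) div 2 = (n - 2 - 1) div 2" "2 * ((n - 1 - 1) div 2) + 1 = n - 2" "(n - 1 - 1) mod 2 = 1"
      "(n - 2 - 1) mod 2 = 0" "2 * ((n - 1 - 1) div 2) + 2 < n"
      using assms by presburger+
    then show ?thesis using assms by (auto simp: cmv_M_def Theta_def)
  qed
  ultimately show ?thesis by simp
qed

lemma pos_real_nonzero: "pos_real z \<Longrightarrow> z \<noteq> 0"
  by (auto simp: pos_real_def)

lemma pos_real_mult: "pos_real z \<Longrightarrow> pos_real w \<Longrightarrow> pos_real (z * w)"
  by (simp add: pos_real_def)

lemma pos_real_rho: "cmod a < 1 \<Longrightarrow> pos_real (rho a)"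
  by (simp add: pos_real_def rho_def power_less_one_iff abs_square_less_1)

lemma unimodular_eq_if_pos_real:
  assumes "w1 * x = y * w2" "w1 * cnj w1 = 1" "w2 * cnj w2 = 1" "pos_real x" "pos_real y"
  shows "w1 = w2"
proof -
  obtain r1 r2 where r: "x = of_real r1" "y = of_real r2" "r1 > 0" "r2 > 0"
    using assms(4,5) pos_realD by metis
  have "cmod (w1 * x) = cmod (y * w2)" using assms(1) by simp
  then have "r1 = r2"
    using r norm_eq_1_if_mult_cnj[OF assms(2)] norm_eq_1_if_mult_cnj[OF assms(3)] by (simp add: norm_mult)
  then show ?thesis using assms(1) r by simp
qed

definition cmv_params :: "nat \<Rightarrow> (nat \<Rightarrow> complex) \<Rightarrow> complex \<Rightarrow> bool" where
  "cmv_params n \<alpha> \<beta> \<longleftrightarrow> (\<forall>j<n - 1. cmod (\<alpha> j) < 1) \<and> cmod \<beta> = 1"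

context
  fixes n \<alpha> \<beta> assumes params: "cmv_params n \<alpha> \<beta>"
begin

lemma cmv_pos_even_superdiag:
  assumes "even k" "k + 2 < n"
  shows "pos_real (cmv n \<alpha> \<beta> k (k + 2))"
  unfolding cmv_even_superdiag[OF assms]
  by (intro pos_real_mult pos_real_rho) (use params assms in \<open>auto simp: cmv_params_def\<close>)

lemma cmv_pos_odd_subdiag:
  assumes "odd k" "k + 2 < n"
  shows "pos_real (cmv n \<alpha> \<beta> (k + 2) k)"
  unfolding cmv_odd_subdiag[OF assms]
  by (intro pos_real_mult pos_real_rho) (use params assms in \<open>auto simp: cmv_params_def\<close>)

lemma cmv_pos_10:
  assumes "2 \<le> n"
  shows "pos_real (cmv n \<alpha> \<beta> 1 0)"
  unfolding cmv_entry_10[OF assms]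
  by (intro pos_real_rho) (use params assms in \<open>auto simp: cmv_params_def\<close>)

lemma cmv_even_row_right:
  assumes "k + 1 < n" "even k"
  shows "\<exists>j. k < j \<and> j < n \<and> cmv n \<alpha> \<beta> k j \<noteq> 0"
proof (cases "k + 2 < n")
  case True
  then show ?thesis
    using cmv_pos_even_superdiag[OF assms(2) True] pos_real_nonzero by (intro exI[of _ "k + 2"]) auto
next
  case False
  then have k: "k = n - 2" "even n" "2 \<le> n" using assms by presburger+
  have "rho (\<alpha> (n - 2)) \<noteq> 0" "cnj \<beta> \<noteq> 0"
    using params pos_real_nonzero[OF pos_real_rho] k unfolding cmv_params_def by auto
  then show ?thesis using cmv_last_even[OF k(2,3), of \<alpha> \<beta>] k by (intro exI[of _ "n - 1"]) auto
qed

lemma cmv_odd_col_below: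
  assumes "k + 1 < n" "odd k"
  shows "\<exists>j. k < j \<and> j < n \<and> cmv n \<alpha> \<beta> j k \<noteq> 0"
proof (cases "k + 2 < n")
  case True
  then show ?thesis
    using cmv_pos_odd_subdiag[OF assms(2) True] pos_real_nonzero by (intro exI[of _ "k + 2"]) auto
next
  case False
  then have k: "k = n - 2" "odd n" "3 \<le> n" using assms by presburger+
  have "rho (\<alpha> (n - 2)) \<noteq> 0" "cnj \<beta> \<noteq> 0"
    using params pos_real_nonzero[OF pos_real_rho] k unfolding cmv_params_def by auto
  then show ?thesis using cmv_last_odd[OF k(2,3), of \<alpha> \<beta>] k by (intro exI[of _ "n - 1"]) auto
qed

end

section \<open>Uniqueness\<close>

lemma point_measure_match:
  fixes \<nu> g :: "nat \<Rightarrow> real"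
  assumes inj: "inj_on \<xi> {..<n}" and pos: "\<forall>l<n. \<nu> l > 0"
    and eq: "\<forall>z. (\<Sum>j\<in>{j. j < n \<and> \<xi> j = z}. \<nu> j) = (\<Sum>j\<in>{j. j < n \<and> \<zeta> j = z}. g j)"
  obtains f where "inj_on f {..<n}" and "\<And>l. l < n \<Longrightarrow> f l < n \<and> \<zeta> (f l) = \<xi> l \<and> \<nu> l = g (f l)"
proof -
  have atom: "(\<Sum>j\<in>{j. j < n \<and> \<xi> j = \<xi> l}. \<nu> j) = \<nu> l" if "l < n" for l
  proof -
    have "{j. j < n \<and> \<xi> j = \<xi> l} = {l}" using inj that by (auto simp: inj_on_def)
    then show ?thesis by simp
  qed
  have ex: "\<exists>j<n. \<zeta> j = \<xi> l" if l: "l < n" for l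
  proof (rule ccontr)
    assume "\<not> (\<exists>j<n. \<zeta> j = \<xi> l)"
    then have E: "{j. j < n \<and> \<zeta> j = \<xi> l} = {}" by auto
    have "\<nu> l = 0" using eq[rule_format, of "\<xi> l"] atom[OF l] unfolding E by simp
    then show False using pos l by auto
  qed
  define f where "f l = (SOME j. j < n \<and> \<zeta> j = \<xi> l)" for l
  have f: "f l < n \<and> \<zeta> (f l) = \<xi> l" if "l < n" for l
    unfolding f_def by (rule someI_ex[OF ex[OF that]])
  have finj: "inj_on f {..<n}"
  proof (rule inj_onI)
    fix l l' assume l: "l \<in> {..<n}" "l' \<in> {..<n}" and "f l = f l'"
    then have "\<xi> l = \<xi> l'" using f[of l] f[of l'] by simp
    then show "l = l'" using inj l by (auto simp: inj_on_def)
  qed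
  have fsurj: "f ` {..<n} = {..<n}" by (rule endo_inj_surj) (use f finj in auto)
  have atoms: "{j. j < n \<and> \<zeta> j = \<xi> l} = {f l}" if l: "l < n" for l
  proof
    show "{j. j < n \<and> \<zeta> j = \<xi> l} \<subseteq> {f l}"
    proof
      fix j assume j: "j \<in> {j. j < n \<and> \<zeta> j = \<xi> l}"
      then have "j \<in> f ` {..<n}" using fsurj by simp
      then obtain l' where l': "l' < n" "j = f l'" by auto
      then have "\<xi> l' = \<xi> l" using f[OF l'(1)] j by auto
      then show "j \<in> {f l}" using inj l l' by (auto simp: inj_on_def)
    qed
  qed (use f[OF l] in auto)
  have "\<nu> l = g (f l)" if "l < n" for l
    using eq[rule_format, of "\<xi> l"] atom[OF that] atoms[OF that] by simp
  then show ?thesis by (intro that[OF finj]) (use f in auto)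
qed

lemma spectral_measure_eigenbasis:
  fixes \<nu> :: "nat \<Rightarrow> real"
  assumes n1: "n \<ge> 1" and inj: "inj_on \<xi> {..<n}" and pos: "\<forall>j<n. \<nu> j > 0"
    and sm: "spectral_measure n C (e_last n) (\<lambda>z. \<Sum>j\<in>{j. j < n \<and> \<xi> j = z}. \<nu> j)"
  obtains q where "orthonormal_n n q" and "\<forall>l<n. \<forall>i<n. (\<Sum>k<n. C i k * q l k) = \<xi> l * q l i"
    and "\<forall>l<n. q l (n - 1) = of_real (sqrt (\<nu> l))"
proof -
  obtain h \<zeta> where eig: "\<forall>j<n. \<forall>i<n. (\<Sum>k<n. C i k * h j k) = \<zeta> j * h j i"
    and ort: "\<forall>j<n. \<forall>l<n. inner_n n (h j) (h l) = (if j = l then 1 else 0)"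
    and w: "\<forall>z. (\<Sum>j\<in>{j. j < n \<and> \<xi> j = z}. \<nu> j)
              = (\<Sum>j\<in>{j. j < n \<and> \<zeta> j = z}. (cmod (h j (n - 1)))^2)"
    using sm n1 unfolding spectral_measure_def by (auto simp: e_last_unit_vec inner_n_unit_vec_right)
  obtain f where finj: "inj_on f {..<n}"
    and f: "\<And>l. l < n \<Longrightarrow> f l < n \<and> \<zeta> (f l) = \<xi> l \<and> \<nu> l = (cmod (h (f l) (n - 1)))^2"
    using point_measure_match[OF inj pos w] by blast
  define c where "c l = of_real (sqrt (\<nu> l)) / h (f l) (n - 1)" for l
  have c1: "c l * cnj (c l) = 1" if l: "l < n" for l
  proof -
    have pl: "\<nu> l > 0" using pos l by simp
    have "c l * cnj (c l) = of_real (\<nu> l) / (h (f l) (n - 1) * cnj (h (f l) (n - 1)))"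
      using pl by (simp add: c_def abs_of_pos flip: of_real_mult)
    also have "h (f l) (n - 1) * cnj (h (f l) (n - 1)) = of_real (\<nu> l)"
      using f[OF l] by (simp add: mult_cnj_self)
    finally show ?thesis using pl by simp
  qed
  define q where "q l = (\<lambda>i. c l * h (f l) i)" for l
  have "orthonormal_n n q" unfolding orthonormal_n_def
  proof (intro allI impI)
    fix l l' assume l: "l < n" "l' < n"
    have "inner_n n (q l) (q l') = c l * cnj (c l') * inner_n n (h (f l)) (h (f l'))"
      by (simp add: q_def inner_n_scale_left inner_n_scale_right)
    also have "inner_n n (h (f l)) (h (f l')) = (if l = l' then 1 else 0)"
      using ort f l finj by (auto simp: inj_on_def)
    finally show "inner_n n (q l) (q l') = (if l = l' then 1 else 0)" using c1 l by auto
  qed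
  moreover have "(\<Sum>k<n. C i k * q l k) = \<xi> l * q l i" if "l < n" "i < n" for l i
  proof -
    have "(\<Sum>k<n. C i k * q l k) = c l * (\<Sum>k<n. C i k * h (f l) k)"
      by (simp add: q_def sum_distrib_left mult_ac)
    also have "\<dots> = c l * (\<zeta> (f l) * h (f l) i)" using eig f that by simp
    finally show ?thesis using f that by (simp add: q_def mult_ac)
  qed
  moreover have "q l (n - 1) = of_real (sqrt (\<nu> l))" if "l < n" for l
    using f[OF that] pos that by (simp add: q_def c_def)
  ultimately show ?thesis using that by blast
qed

lemma sum_lessThan_eq_single:
  fixes f :: "nat \<Rightarrow> 'a::comm_monoid_add"
  assumes "k < n" and "\<And>c. c < n \<Longrightarrow> c \<noteq> k \<Longrightarrow> f c = 0"
  shows "(\<Sum>c<n. f c) = f k"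
  using sum.mono_neutral_left[of "{..<n}" "{k}" f] assms by auto

definition basis_matrix :: "nat \<Rightarrow> (nat \<Rightarrow> nat \<Rightarrow> complex) \<Rightarrow> nat \<Rightarrow> nat \<Rightarrow> complex" where
  "basis_matrix n q a l = (if a < n \<and> l < n then q l a else 0)"

definition diag_matrix :: "nat \<Rightarrow> (nat \<Rightarrow> complex) \<Rightarrow> nat \<Rightarrow> nat \<Rightarrow> complex" where
  "diag_matrix n \<xi> a b = (if a < n \<and> b = a then \<xi> a else 0)"

lemma zero_outside_basis_matrix: "zero_outside n (basis_matrix n q)"
  by (auto simp: zero_outside_def basis_matrix_def)

lemma zero_outside_diag_matrix: "zero_outside n (diag_matrix n \<xi>)"
  by (auto simp: zero_outside_def diag_matrix_def)

lemma unitary_basis_matrix: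
  assumes oq: "orthonormal_n n q"
  shows "unitary_n n (basis_matrix n q)"
proof -
  have "(\<Sum>k<n. cnj (basis_matrix n q k i) * basis_matrix n q k j) = inner_n n (q j) (q i)"
    if "i < n" "j < n" for i j
    unfolding inner_n_def using that by (intro sum.cong refl) (simp add: basis_matrix_def mult.commute)
  then show ?thesis
    using orthonormal_rows[OF oq] oq unfolding unitary_n_def orthonormal_n_def
    by (simp add: basis_matrix_def)
qed

lemma unitary_n_mat_adj: "unitary_n n A \<Longrightarrow> unitary_n n (mat_adj A)"
  unfolding unitary_n_def mat_adj_def by (simp add: mult.commute)

lemma mat_mult_eigenbasis:
  assumes C: "zero_outside n C" and eig: "\<forall>l<n. \<forall>i<n. (\<Sum>k<n. C i k * q l k) = \<xi> l * q l i"
  shows "mat_mult n C (basis_matrix n q) = mat_mult n (basis_matrix n q) (diag_matrix n \<xi>)"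
proof (intro ext)
  fix i l
  show "mat_mult n C (basis_matrix n q) i l = mat_mult n (basis_matrix n q) (diag_matrix n \<xi>) i l"
  proof (cases "i < n \<and> l < n")
    case True
    have "mat_mult n C (basis_matrix n q) i l = (\<Sum>k<n. C i k * q l k)"
      unfolding mat_mult_def using True by (intro sum.cong refl) (simp add: basis_matrix_def)
    also have "\<dots> = \<xi> l * q l i" using eig True by simp
    also have "\<dots> = mat_mult n (basis_matrix n q) (diag_matrix n \<xi>) i l"
      unfolding mat_mult_def using True
      by (subst sum_lessThan_eq_single[of l]) (auto simp: diag_matrix_def basis_matrix_def mult.commute)
    finally show ?thesis .
  next
    case False
    then show ?thesis using C by (auto simp: mat_mult_def basis_matrix_def diag_matrix_def zero_outside_def)
  qed
qed

lemma eigenbasis_intertwiner: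
  assumes C1: "zero_outside n C1" and C2: "zero_outside n C2"
    and oq: "orthonormal_n n q" and oq': "orthonormal_n n q'"
    and eig: "\<forall>l<n. \<forall>i<n. (\<Sum>k<n. C1 i k * q l k) = \<xi> l * q l i"
    and eig': "\<forall>l<n. \<forall>i<n. (\<Sum>k<n. C2 i k * q' l k) = \<xi> l * q' l i"
  defines "W \<equiv> mat_mult n (basis_matrix n q') (mat_adj (basis_matrix n q))"
  shows "unitary_n n W" and "mat_mult n W C1 = mat_mult n C2 W"
proof -
  let ?Q = "basis_matrix n q" and ?Q' = "basis_matrix n q'" and ?D = "diag_matrix n \<xi>"
  have QQ: "mat_mult n ?Q (mat_adj ?Q) = mat_id n" "mat_mult n (mat_adj ?Q) ?Q = mat_id n"
    using unitary_n_mat_mult_adj[OF unitary_basis_matrix[OF oq] zero_outside_basis_matrix] by auto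
  show "unitary_n n W" unfolding W_def
    by (intro unitary_n_mat_mult unitary_basis_matrix oq oq' unitary_n_mat_adj
        zero_outside_basis_matrix zero_outside_mat_adj)
  have "C1 = mat_mult n C1 (mat_mult n ?Q (mat_adj ?Q))" using QQ(1) mat_mult_id_right[OF C1] by simp
  also have "\<dots> = mat_mult n (mat_mult n ?Q ?D) (mat_adj ?Q)"
    by (simp add: mat_mult_assoc[symmetric] mat_mult_eigenbasis[OF C1 eig])
  finally have C1_eq: "C1 = mat_mult n (mat_mult n ?Q ?D) (mat_adj ?Q)" .
  have "mat_mult n W C1 = mat_mult n ?Q' (mat_mult n (mat_mult n (mat_adj ?Q) ?Q) (mat_mult n ?D (mat_adj ?Q)))"
    unfolding W_def by (subst C1_eq) (simp only: mat_mult_assoc)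
  also have "\<dots> = mat_mult n ?Q' (mat_mult n ?D (mat_adj ?Q))"
    using QQ(2) mat_mult_id_left[OF zero_outside_mat_mult[OF zero_outside_diag_matrix
          zero_outside_mat_adj[OF zero_outside_basis_matrix]]] by simp
  also have "\<dots> = mat_mult n C2 W"
    unfolding W_def by (simp only: mat_mult_assoc[symmetric] mat_mult_eigenbasis[OF C2 eig'])
  finally show "mat_mult n W C1 = mat_mult n C2 W" .
qed

lemma basis_intertwiner_column:
  assumes oq': "orthonormal_n n q'" and same: "\<forall>l<n. q l m = q' l m" and a: "a < n" "a \<noteq> m" "m < n"
  shows "mat_mult n (basis_matrix n q') (mat_adj (basis_matrix n q)) a m = 0"
proof -
  have "mat_mult n (basis_matrix n q') (mat_adj (basis_matrix n q)) a m = (\<Sum>l<n. q' l a * cnj (q' l m))"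
    unfolding mat_mult_def using a same by (intro sum.cong refl) (simp add: mat_adj_def basis_matrix_def)
  also have "\<dots> = 0" using orthonormal_rows[OF oq' a(1,3)] a(2) by simp
  finally show ?thesis .
qed

definition isolated_index :: "nat \<Rightarrow> (nat \<Rightarrow> nat \<Rightarrow> complex) \<Rightarrow> nat \<Rightarrow> bool" where
  "isolated_index n W m \<longleftrightarrow> (\<forall>a<n. a \<noteq> m \<longrightarrow> W a m = 0 \<and> W m a = 0)"

lemma unitary_isolated_if_col:
  assumes u: "unitary_n n W" and m: "m < n" and col: "\<forall>a<n. a \<noteq> m \<longrightarrow> W a m = 0"
  shows "isolated_index n W m"
proof -
  have "(\<Sum>a<n. cnj (W a m) * W a m) = 1" using u m unfolding unitary_n_def by auto
  then have wm: "W m m * cnj (W m m) = 1"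
    using sum_lessThan_eq_single[OF m, of "\<lambda>a. cnj (W a m) * W a m"] col by (simp add: mult.commute)
  have row: "(\<Sum>b<n. W m b * cnj (W m b)) = 1" using u m unfolding unitary_n_def by auto
  have "W m b = 0" if "b < n" "b \<noteq> m" for b
    by (rule unit_sum_others_zero[OF row wm m that])
  then show ?thesis using col unfolding isolated_index_def by blast
qed

lemma unitary_isolated_if_row:
  assumes u: "unitary_n n W" and m: "m < n" and row: "\<forall>b<n. b \<noteq> m \<longrightarrow> W m b = 0"
  shows "isolated_index n W m"
  using unitary_isolated_if_col[OF unitary_n_mat_adj[OF u] m] row
  by (simp add: mat_adj_def isolated_index_def)

text \<open>Each step of the induction that an intertwiner W C1 = C2 W of CMV-shaped matrices fixing e_{n-1}
  is diagonal: compare the entries (a, j) resp. (j, b) of both sides, where j is the index of a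
  nonzero entry beyond k in row k of C1 (k even) resp. column k of C2 (k odd).\<close>

context
  fixes n :: nat and W C1 C2 :: "nat \<Rightarrow> nat \<Rightarrow> complex"
  assumes uW: "unitary_n n W"
    and WC: "\<forall>a<n. \<forall>b<n. (\<Sum>c<n. W a c * C1 c b) = (\<Sum>c<n. C2 a c * W c b)"
    and pat1: "cmv_zero_pattern n C1" and pat2: "cmv_zero_pattern n C2"
begin

lemma intertwiner_isolated_even:
  assumes k: "even k" "k < j" "j < n" "C1 k j \<noteq> 0"
    and IH: "\<And>m. k < m \<Longrightarrow> m < n \<Longrightarrow> isolated_index n W m"
  shows "isolated_index n W k"
proof (rule unitary_isolated_if_col[OF uW], use k in simp, intro allI impI)
  fix a assume a: "a < n" "a \<noteq> k"
  show "W a k = 0"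
  proof (cases "a < k")
    case False
    then show ?thesis using IH[of a] a unfolding isolated_index_def by auto
  next
    case True
    have terms: "C2 a c * W c j = 0" if "c < n" for c
    proof (cases "c = j")
      case True
      have "C2 a j = 0"
      proof (rule ccontr)
        assume "C2 a j \<noteq> 0"
        then have "j \<le> a + 2 \<and> (odd j \<longrightarrow> j \<le> a + 1)" using cmv_zero_pattern_upper[OF pat2] a k by blast
        then show False using \<open>a < k\<close> k by presburger
      qed
      then show ?thesis using True by simp
    qed (use IH[of j] k that in \<open>simp add: isolated_index_def\<close>)
    have "(\<Sum>c<n. C2 a c * W c j) = 0" by (rule sum.neutral) (simp add: terms)
    moreover have "W a c * C1 c j = 0" if "c < n" "c \<noteq> k" for c
    proof (cases "c < k")
      case True
      have "C1 c j = 0"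
      proof (rule ccontr)
        assume "C1 c j \<noteq> 0"
        then have "j \<le> c + 2 \<and> (odd j \<longrightarrow> j \<le> c + 1)" using cmv_zero_pattern_upper[OF pat1] that k by blast
        then show False using True k by presburger
      qed
      then show ?thesis by simp
    qed (use IH[of c] \<open>a < k\<close> that a in \<open>simp add: isolated_index_def\<close>)
    then have "(\<Sum>c<n. W a c * C1 c j) = W a k * C1 k j"
      using k by (intro sum_lessThan_eq_single) auto
    ultimately show ?thesis using WC a k by simp
  qed
qed

lemma intertwiner_isolated_odd:
  assumes k: "odd k" "k < j" "j < n" "C2 j k \<noteq> 0"
    and IH: "\<And>m. k < m \<Longrightarrow> m < n \<Longrightarrow> isolated_index n W m"
  shows "isolated_index n W k"
proof (rule unitary_isolated_if_row[OF uW], use k in simp, intro allI impI)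
  fix b assume b: "b < n" "b \<noteq> k"
  show "W k b = 0"
  proof (cases "b < k")
    case False
    then show ?thesis using IH[of b] b unfolding isolated_index_def by auto
  next
    case True
    have terms: "W j c * C1 c b = 0" if "c < n" for c
    proof (cases "c = j")
      case True
      have "C1 j b = 0"
      proof (rule ccontr)
        assume "C1 j b \<noteq> 0"
        then have "j \<le> b + 2 \<and> (even j \<longrightarrow> j \<le> b + 1)" using cmv_zero_pattern_lower[OF pat1] b k by blast
        then show False using \<open>b < k\<close> k by presburger
      qed
      then show ?thesis using True by simp
    qed (use IH[of j] k that in \<open>simp add: isolated_index_def\<close>)
    have "(\<Sum>c<n. W j c * C1 c b) = 0" by (rule sum.neutral) (simp add: terms)
    moreover have "C2 j c * W c b = 0" if "c < n" "c \<noteq> k" for c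
    proof (cases "c < k")
      case True
      have "C2 j c = 0"
      proof (rule ccontr)
        assume "C2 j c \<noteq> 0"
        then have "j \<le> c + 2 \<and> (even j \<longrightarrow> j \<le> c + 1)" using cmv_zero_pattern_lower[OF pat2] that k by blast
        then show False using True k by presburger
      qed
      then show ?thesis by simp
    qed (use IH[of c] \<open>b < k\<close> that b in \<open>simp add: isolated_index_def\<close>)
    then have "(\<Sum>c<n. C2 j c * W c b) = C2 j k * W k b"
      using k by (intro sum_lessThan_eq_single) auto
    ultimately show ?thesis using WC b k by simp
  qed
qed

lemma cmv_intertwiner_diagonal:
  assumes n: "1 \<le> n" and last: "\<forall>a<n. a \<noteq> n - 1 \<longrightarrow> W a (n - 1) = 0"
    and NZ1: "\<And>k. k + 1 < n \<Longrightarrow> even k \<Longrightarrow> \<exists>j. k < j \<and> j < n \<and> C1 k j \<noteq> 0"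
    and NZ2: "\<And>k. k + 1 < n \<Longrightarrow> odd k \<Longrightarrow> \<exists>j. k < j \<and> j < n \<and> C2 j k \<noteq> 0"
  shows "\<forall>a<n. \<forall>b<n. a \<noteq> b \<longrightarrow> W a b = 0"
proof -
  have "\<forall>m. k \<le> m \<longrightarrow> m < n \<longrightarrow> isolated_index n W m" if "k \<le> n - 1" for k
    using that
  proof (induction k rule: inc_induct)
    case base
    have "isolated_index n W (n - 1)" using unitary_isolated_if_col[OF uW _ last] n by simp
    moreover have "m = n - 1" if "n - 1 \<le> m" "m < n" for m using that by simp
    ultimately show ?case by auto
  next
    case (step k)
    then have kn: "k + 1 < n" by simp
    have IH: "\<And>m. k < m \<Longrightarrow> m < n \<Longrightarrow> isolated_index n W m" using step.IH by auto
    have "isolated_index n W k"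
    proof (cases "even k")
      case True
      then obtain j where "k < j" "j < n" "C1 k j \<noteq> 0" using NZ1 kn by blast
      then show ?thesis using intertwiner_isolated_even True IH by blast
    next
      case False
      then obtain j where "k < j" "j < n" "C2 j k \<noteq> 0" using NZ2 kn by blast
      then show ?thesis using intertwiner_isolated_odd False IH by blast
    qed
    then show ?case using IH by (metis le_neq_implies_less)
  qed
  then show ?thesis unfolding isolated_index_def by auto
qed

end

lemma equal_first_by_steps:
  fixes w :: "nat \<Rightarrow> 'a" and n a :: nat
  assumes "2 \<le> n \<Longrightarrow> w 1 = w 0" and "\<And>k. k + 2 < n \<Longrightarrow> w (k + 2) = w k" and "a < n"
  shows "w a = w 0"
  using assms(3)
proof (induction a rule: less_induct)
  case (less a)
  show ?case
  proof (cases "a < 2")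
    case True
    then show ?thesis using assms(1) less.prems by (cases a) auto
  next
    case False
    then obtain b where b: "a = b + 2" by (metis add.commute le_Suc_ex not_less)
    have "w a = w b" using assms(2)[of b] less.prems b by simp
    also have "w b = w 0" using less.IH[of b] less.prems b by simp
    finally show ?thesis .
  qed
qed

text \<open>A diagonal unitary intertwining two CMV matrices has equal diagonal entries, because it
  preserves the positive entries C_{10}, C_{k,k+2} (k even) and C_{k+2,k} (k odd), which link every
  index to index 0; hence the two matrices coincide.\<close>

lemma cmv_eq_if_diagonal_intertwiner:
  fixes w :: "nat \<Rightarrow> complex"
  assumes v1: "cmv_params n \<alpha>1 \<beta>1" and v2: "cmv_params n \<alpha>2 \<beta>2"
    and unimod: "\<And>a. a < n \<Longrightarrow> w a * cnj (w a) = 1"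
    and rel: "\<And>a b. a < n \<Longrightarrow> b < n \<Longrightarrow> w a * cmv n \<alpha>1 \<beta>1 a b = cmv n \<alpha>2 \<beta>2 a b * w b"
  shows "cmv n \<alpha>1 \<beta>1 = cmv n \<alpha>2 \<beta>2"
proof -
  have step2: "w (k + 2) = w k" if kn: "k + 2 < n" for k
  proof (cases "even k")
    case True
    have "w k = w (k + 2)"
      by (rule unimodular_eq_if_pos_real[OF rel unimod unimod cmv_pos_even_superdiag[OF v1 True kn]
            cmv_pos_even_superdiag[OF v2 True kn]]) (use kn in simp_all)
    then show ?thesis by simp
  next
    case False
    show ?thesis
      by (rule unimodular_eq_if_pos_real[OF rel unimod unimod cmv_pos_odd_subdiag[OF v1 False kn]
            cmv_pos_odd_subdiag[OF v2 False kn]]) (use kn in simp_all)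
  qed
  have step1: "w 1 = w 0" if n2: "2 \<le> n"
    by (rule unimodular_eq_if_pos_real[OF rel unimod unimod cmv_pos_10[OF v1 n2] cmv_pos_10[OF v2 n2]])
      (use n2 in simp_all)
  have wall: "w a = w 0" if "a < n" for a
    using equal_first_by_steps[of n w, OF step1 step2 that] .
  show ?thesis
  proof (intro ext)
    fix a b
    show "cmv n \<alpha>1 \<beta>1 a b = cmv n \<alpha>2 \<beta>2 a b"
    proof (cases "a < n \<and> b < n")
      case True
      then have "w b * cmv n \<alpha>1 \<beta>1 a b = w b * cmv n \<alpha>2 \<beta>2 a b"
        using rel[of a b] wall[of a] wall[of b] by (simp add: mult.commute)
      moreover have "w b \<noteq> 0" using unimod[of b] True by auto
      ultimately show ?thesis by simp
    qed (use zero_outside_cmv in \<open>auto simp: zero_outside_def\<close>)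
  qed
qed

lemma cmv_spectral_unique:
  fixes \<nu> :: "nat \<Rightarrow> real"
  assumes n1: "n \<ge> 1" and inj: "inj_on \<xi> {..<n}" and pos: "\<forall>j<n. \<nu> j > 0"
    and v1: "cmv_params n \<alpha>1 \<beta>1" and v2: "cmv_params n \<alpha>2 \<beta>2"
    and s1: "spectral_measure n (cmv n \<alpha>1 \<beta>1) (e_last n) (\<lambda>z. \<Sum>j\<in>{j. j < n \<and> \<xi> j = z}. \<nu> j)"
    and s2: "spectral_measure n (cmv n \<alpha>2 \<beta>2) (e_last n) (\<lambda>z. \<Sum>j\<in>{j. j < n \<and> \<xi> j = z}. \<nu> j)"
  shows "cmv n \<alpha>1 \<beta>1 = cmv n \<alpha>2 \<beta>2"
proof -
  let ?C1 = "cmv n \<alpha>1 \<beta>1" and ?C2 = "cmv n \<alpha>2 \<beta>2"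
  obtain q where oq: "orthonormal_n n q" and eig: "\<forall>l<n. \<forall>i<n. (\<Sum>k<n. ?C1 i k * q l k) = \<xi> l * q l i"
      and qn: "\<forall>l<n. q l (n - 1) = of_real (sqrt (\<nu> l))"
    by (rule spectral_measure_eigenbasis[OF n1 inj pos s1])
  obtain q' where oq': "orthonormal_n n q'" and eig': "\<forall>l<n. \<forall>i<n. (\<Sum>k<n. ?C2 i k * q' l k) = \<xi> l * q' l i"
      and qn': "\<forall>l<n. q' l (n - 1) = of_real (sqrt (\<nu> l))"
    by (rule spectral_measure_eigenbasis[OF n1 inj pos s2])
  define W where "W = mat_mult n (basis_matrix n q') (mat_adj (basis_matrix n q))"
  have uW: "unitary_n n W" and WC: "mat_mult n W ?C1 = mat_mult n ?C2 W"
    using eigenbasis_intertwiner[OF zero_outside_cmv zero_outside_cmv oq oq' eig eig'] by (simp_all add: W_def)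
  have WCe: "\<forall>a<n. \<forall>b<n. (\<Sum>c<n. W a c * ?C1 c b) = (\<Sum>c<n. ?C2 a c * W c b)"
    using WC by (metis mat_mult_def)
  have last: "\<forall>a<n. a \<noteq> n - 1 \<longrightarrow> W a (n - 1) = 0"
    using basis_intertwiner_column[OF oq', of q "n - 1"] qn qn' n1 by (simp add: W_def)
  have offdiag: "\<forall>a<n. \<forall>b<n. a \<noteq> b \<longrightarrow> W a b = 0"
    by (rule cmv_intertwiner_diagonal[OF uW WCe cmv_zero_pattern_cmv cmv_zero_pattern_cmv n1 last
          cmv_even_row_right[OF v1] cmv_odd_col_below[OF v2]])
  show ?thesis
  proof (rule cmv_eq_if_diagonal_intertwiner[OF v1 v2, of "\<lambda>a. W a a"])
    fix a assume a: "a < n"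
    have "(\<Sum>c<n. cnj (W c a) * W c a) = 1" using uW a unfolding unitary_n_def by auto
    then show "W a a * cnj (W a a) = 1"
      using sum_lessThan_eq_single[OF a, of "\<lambda>c. cnj (W c a) * W c a"] offdiag a by (simp add: mult.commute)
  next
    fix a b assume ab: "a < n" "b < n"
    have "(\<Sum>c<n. W a c * ?C1 c b) = W a a * ?C1 a b"
      using offdiag ab by (intro sum_lessThan_eq_single) auto
    moreover have "(\<Sum>c<n. ?C2 a c * W c b) = ?C2 a b * W b b"
      using offdiag ab by (intro sum_lessThan_eq_single) auto
    ultimately show "W a a * ?C1 a b = ?C2 a b * W b b" using WCe ab by simp
  qed
qed

theorem theorem1:
  fixes n :: nat and \<xi> :: "nat \<Rightarrow> complex" and \<nu> :: "nat \<Rightarrow> real"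
  assumes "n \<ge> 1"
    and "\<forall>j<n. cmod (\<xi> j) = 1"
    and "inj_on \<xi> {..<n}"
    and "\<forall>j<n. \<nu> j > 0"
    and "(\<Sum>j<n. \<nu> j) = 1"
  shows "\<exists>!C. (\<exists>\<alpha> \<beta>. (\<forall>j<n - 1. cmod (\<alpha> j) < 1) \<and> cmod \<beta> = 1 \<and> C = cmv n \<alpha> \<beta>)
             \<and> spectral_measure n C (e_last n) (\<lambda>z. \<Sum>j\<in>{j. j < n \<and> \<xi> j = z}. \<nu> j)"
proof (rule ex_ex1I)
  obtain \<alpha> \<beta> where "(\<forall>j<n - 1. cmod (\<alpha> j) < 1) \<and> cmod \<beta> = 1"
    and "spectral_measure n (cmv n \<alpha> \<beta>) (e_last n) (\<lambda>z. \<Sum>j\<in>{j. j < n \<and> \<xi> j = z}. \<nu> j)"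
    using exists_cmv_with_spectral_measure[OF assms] by blast
  then show "\<exists>C. (\<exists>\<alpha> \<beta>. (\<forall>j<n - 1. cmod (\<alpha> j) < 1) \<and> cmod \<beta> = 1 \<and> C = cmv n \<alpha> \<beta>)
             \<and> spectral_measure n C (e_last n) (\<lambda>z. \<Sum>j\<in>{j. j < n \<and> \<xi> j = z}. \<nu> j)"
    by blast
next
  fix C1 C2
  assume C1: "(\<exists>\<alpha> \<beta>. (\<forall>j<n - 1. cmod (\<alpha> j) < 1) \<and> cmod \<beta> = 1 \<and> C1 = cmv n \<alpha> \<beta>)
             \<and> spectral_measure n C1 (e_last n) (\<lambda>z. \<Sum>j\<in>{j. j < n \<and> \<xi> j = z}. \<nu> j)"
    and C2: "(\<exists>\<alpha> \<beta>. (\<forall>j<n - 1. cmod (\<alpha> j) < 1) \<and> cmod \<beta> = 1 \<and> C2 = cmv n \<alpha> \<beta>)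
             \<and> spectral_measure n C2 (e_last n) (\<lambda>z. \<Sum>j\<in>{j. j < n \<and> \<xi> j = z}. \<nu> j)"
  obtain \<alpha>1 \<beta>1 where p1: "cmv_params n \<alpha>1 \<beta>1" and eq1: "C1 = cmv n \<alpha>1 \<beta>1"
    using C1 unfolding cmv_params_def by blast
  obtain \<alpha>2 \<beta>2 where p2: "cmv_params n \<alpha>2 \<beta>2" and eq2: "C2 = cmv n \<alpha>2 \<beta>2"
    using C2 unfolding cmv_params_def by blast
  show "C1 = C2"
    using cmv_spectral_unique[OF assms(1,3,4) p1 p2] C1 C2 by (simp add: eq1 eq2)
qed

end
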